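(* Let $\mathbb K$ be a commutative semiring with $0\ne1$ and let $R:\Delta^*\to K$ be an algebraic formal power series. Then there is a regular nested word series $S:\mathrm{NW}(\Delta)\to K$ such that $\pi(S)=R$.
   Context: Nested words: $\Delta$ finite alphabet. A nesting relation of width $n$ is a relation $\nu$ on $[n]$ with: $\nu(i,j)\Rightarrow i<j$; $\nu(i,j),\nu(i,j')\Rightarrow j=j'$ and $\nu(i,j),\nu(i',j)\Rightarrow i=i'$; $\nu(i,j),\nu(i',j'),i<i'\Rightarrow j<i'$ or $j'<j$. A nested word is $(w,\nu)$, $w=a_1\cdots a_n\in\Delta^+$, $\nu$ of width $n$; $\mathrm{NW}(\Delta)$ is their set. If $\nu(i,j)$, $i$ is a call and $j$ a return position; others are internal. WNWA over $\mathbb K$: $\mathcal A=(Q,\iota,\delta_{call},\delta_{int},\delta_{ret},\kappa)$, $Q$ finite, $\delta_{call},\delta_{int}:Q\times\Delta\times Q\to K$, $\delta_{ret}:Q\times Q\times\Delta\times Q\to K$, $\iota,\kappa:Q\to K$. A run on $(a_1\cdots a_n,\nu)$ is $(q_0,\dots,q_n)$; weight at $j$: $\delta_{call}(q_{j-1},a_j,q_j)$ for a call $j$, $\delta_{int}(q_{j-1},a_j,q_j)$ for internal $j$, $\delta_{ret}(q_{j-1},q_{i-1},a_j,q_j)$ if $\nu(i,j)$; run weight is the product. $\|\mathcal A\|(nw)=\sum_{(q_0..q_n)}\iota(q_0)\mathrm{wt}\,\kappa(q_n)$. A series is regular if it equals some $\|\mathcal A\|$. Projection: $\pi(w,\nu)=w$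 and $\pi(S)(w)=\sum_{nw\in\mathrm{NW}(\Delta),\,\pi(nw)=w}S(nw)$ for $w\in\Delta^*$. Algebraic series: formal power series are maps $\Delta^*\to K$; $\varepsilon$ the empty word; pointwise sum and scalar product, Cauchy product $(S_1S_2)(w)=\sum_{w=w_1w_2}S_1(w_1)S_2(w_2)$; words identified with their characteristic series. For a finite variable set $\mathcal X$ disjoint from $\Delta$, a polynomial is a finitely supported map $(\Delta\cup\mathcal X)^*\to K$; an algebraic system is a family $(P_X)_{X\in\mathcal X}$ of polynomials; a solution is $(S_X)_{X\in\mathcal X}$ with $S_X=\sum (P_X,u_1X_1\cdots u_kX_ku_{k+1})\,u_1S_{X_1}\cdots u_kS_{X_k}u_{k+1}$ over the support of $P_X$ ($u_j\in\Delta^*$, $X_j\in\mathcal X$). Proper: $P_X(Y)=P_X(\varepsilon)=0$ for all $X,Y$; quasiregular: $S(\varepsilon)=0$. A proper system has exactly one quasiregular solution; a series is algebraic if it is a component of the quasiregular solution of a proper algebraic system. *)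

theory Defs
  imports Main
begin

text \<open>Positions are 1-based: position j of a word w carries the letter w ! (j - 1).
  A nesting relation of width n is a set of pairs of positions in {1..n}.\<close>

definition nesting :: "nat \<Rightarrow> (nat \<times> nat) set \<Rightarrow> bool" where
  "nesting n \<nu> \<longleftrightarrow>
     \<nu> \<subseteq> {1..n} \<times> {1..n} \<and>
     (\<forall>i j. (i, j) \<in> \<nu> \<longrightarrow> i < j) \<and>
     (\<forall>i j j'. (i, j) \<in> \<nu> \<longrightarrow> (i, j') \<in> \<nu> \<longrightarrow> j = j') \<and>
     (\<forall>i i' j. (i, j) \<in> \<nu> \<longrightarrow> (i', j) \<in> \<nu> \<longrightarrow> i = i') \<and>
     (\<forall>i j i' j'. (i, j) \<in> \<nu> \<longrightarrow> (i', j') \<in> \<nu> \<longrightarrow> i < i' \<longrightarrow> j < i' \<or> j' < j)"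

type_synonym 'a nword = "'a list \<times> (nat \<times> nat) set"

definition NW :: "'a nword set" where
  "NW = {(w, \<nu>). w \<noteq> [] \<and> nesting (length w) \<nu>}"

definition is_call :: "(nat \<times> nat) set \<Rightarrow> nat \<Rightarrow> bool" where
  "is_call \<nu> j \<longleftrightarrow> (\<exists>k. (j, k) \<in> \<nu>)"

definition is_return :: "(nat \<times> nat) set \<Rightarrow> nat \<Rightarrow> bool" where
  "is_return \<nu> j \<longleftrightarrow> (\<exists>i. (i, j) \<in> \<nu>)"

definition call_of :: "(nat \<times> nat) set \<Rightarrow> nat \<Rightarrow> nat" where
  "call_of \<nu> j = (THE i. (i, j) \<in> \<nu>)"

definition pos_weight ::
  "(nat \<Rightarrow> 'a \<Rightarrow> nat \<Rightarrow> 'k) \<Rightarrow> (nat \<Rightarrow> 'a \<Rightarrow> nat \<Rightarrow> 'k) \<Rightarrow>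
   (nat \<Rightarrow> nat \<Rightarrow> 'a \<Rightarrow> nat \<Rightarrow> 'k) \<Rightarrow> 'a nword \<Rightarrow> nat list \<Rightarrow> nat \<Rightarrow> 'k" where
  "pos_weight dcall dint dret nw r j =
     (let w = fst nw; \<nu> = snd nw in
      if is_call \<nu> j then dcall (r ! (j - 1)) (w ! (j - 1)) (r ! j)
      else if is_return \<nu> j then dret (r ! (j - 1)) (r ! (call_of \<nu> j - 1)) (w ! (j - 1)) (r ! j)
      else dint (r ! (j - 1)) (w ! (j - 1)) (r ! j))"

definition runs :: "nat set \<Rightarrow> nat \<Rightarrow> nat list set" where
  "runs Q n = {r. length r = Suc n \<and> set r \<subseteq> Q}"

definition wnwa_behaviour ::
  "nat set \<Rightarrow> (nat \<Rightarrow> 'k::comm_semiring_1) \<Rightarrow> (nat \<Rightarrow> 'a \<Rightarrow> nat \<Rightarrow> 'k) \<Rightarrow>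
   (nat \<Rightarrow> 'a \<Rightarrow> nat \<Rightarrow> 'k) \<Rightarrow> (nat \<Rightarrow> nat \<Rightarrow> 'a \<Rightarrow> nat \<Rightarrow> 'k) \<Rightarrow> (nat \<Rightarrow> 'k) \<Rightarrow>
   'a nword \<Rightarrow> 'k" where
  "wnwa_behaviour Q \<iota> dcall dint dret \<kappa> nw =
     (\<Sum>r \<in> runs Q (length (fst nw)).
        \<iota> (r ! 0) * (\<Prod>j \<in> {1..length (fst nw)}. pos_weight dcall dint dret nw r j)
          * \<kappa> (r ! length (fst nw)))"

definition regular_nw_series :: "('a nword \<Rightarrow> 'k::comm_semiring_1) \<Rightarrow> bool" where
  "regular_nw_series S \<longleftrightarrow>
     (\<exists>Q \<iota> dcall dint dret \<kappa>. finite Q \<and>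
        (\<forall>nw \<in> NW. S nw = wnwa_behaviour Q \<iota> dcall dint dret \<kappa> nw))"

definition proj :: "('a nword \<Rightarrow> 'k::comm_semiring_1) \<Rightarrow> 'a list \<Rightarrow> 'k" where
  "proj S w = (\<Sum>\<nu> \<in> {\<nu>. (w, \<nu>) \<in> NW}. S (w, \<nu>))"

definition char_series :: "'a list \<Rightarrow> 'a list \<Rightarrow> 'k::comm_semiring_1" where
  "char_series u w = (if w = u then 1 else 0)"

definition cauchy :: "('a list \<Rightarrow> 'k::comm_semiring_1) \<Rightarrow> ('a list \<Rightarrow> 'k) \<Rightarrow> 'a list \<Rightarrow> 'k" where
  "cauchy S1 S2 w = (\<Sum>i\<le>length w. S1 (take i w) * S2 (drop i w))"

fun subst_word :: "(nat \<Rightarrow> 'a list \<Rightarrow> 'k::comm_semiring_1) \<Rightarrow> ('a + nat) list \<Rightarrow> 'a list \<Rightarrow> 'k" where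
  "subst_word S [] = char_series []"
| "subst_word S (Inl a # u) = cauchy (char_series [a]) (subst_word S u)"
| "subst_word S (Inr X # u) = cauchy (S X) (subst_word S u)"

text \<open>An algebraic system over the finite variable set V: P X is a polynomial
  (finitely supported map on words over letters and variables of V) for X in V.\<close>
definition alg_system :: "nat set \<Rightarrow> (nat \<Rightarrow> ('a + nat) list \<Rightarrow> 'k::comm_semiring_1) \<Rightarrow> bool" where
  "alg_system V P \<longleftrightarrow> finite V \<and>
     (\<forall>X \<in> V. finite {u. P X u \<noteq> 0} \<and>
        (\<forall>u. P X u \<noteq> 0 \<longrightarrow> (\<forall>Y. Inr Y \<in> set u \<longrightarrow> Y \<in> V)))"

definition proper_system :: "nat set \<Rightarrow> (nat \<Rightarrow> ('a + nat) list \<Rightarrow> 'k::comm_semiring_1) \<Rightarrow> bool" where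
  "proper_system V P \<longleftrightarrow> (\<forall>X \<in> V. P X [] = 0 \<and> (\<forall>Y \<in> V. P X [Inr Y] = 0))"

definition is_solution ::
  "nat set \<Rightarrow> (nat \<Rightarrow> ('a + nat) list \<Rightarrow> 'k::comm_semiring_1) \<Rightarrow> (nat \<Rightarrow> 'a list \<Rightarrow> 'k) \<Rightarrow> bool" where
  "is_solution V P S \<longleftrightarrow>
     (\<forall>X \<in> V. S X = (\<lambda>w. \<Sum>u \<in> {u. P X u \<noteq> 0}. P X u * subst_word S u w))"

definition quasiregular :: "('a list \<Rightarrow> 'k::comm_semiring_1) \<Rightarrow> bool" where
  "quasiregular S \<longleftrightarrow> S [] = 0"

definition algebraic_series :: "('a list \<Rightarrow> 'k::comm_semiring_1) \<Rightarrow> bool" where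
  "algebraic_series R \<longleftrightarrow>
     (\<exists>V P S X0. alg_system V P \<and> proper_system V P \<and> X0 \<in> V \<and>
        is_solution V P S \<and> (\<forall>X \<in> V. quasiregular (S X)) \<and> R = S X0)"

end

theory Submission
  imports Defs
begin

text \<open>A proper algebraic system can be put into left-corner form: every component of its
  quasiregular solution, and every series \<open>corner Y X\<close> describing a climb along the left spine
  of a derivation tree, is a finite sum of terms ``a letter followed by a product of boundedly
  many series from a finite set of items''. A word can therefore be read from left to right while
  keeping the stack of pending items. The automaton keeps this stack bounded by turning every push
  into a call of the nested word; the matching return restores the rest of the stack. Summing the
  weights of the automaton over all nestings of a word and all runs from the stack holding the
  start variable to the empty stack gives the coefficient of the algebraic series; this is proved
  by induction on the length of the word, splitting at the first position, which is either
  internal or a call.\<close>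

definition shift_nest :: "nat \<Rightarrow> (nat \<times> nat) set \<Rightarrow> (nat \<times> nat) set" where
  "shift_nest d \<nu> = (\<lambda>(i, j). (i + d, j + d)) ` \<nu>"

definition unshift_nest :: "nat \<Rightarrow> (nat \<times> nat) set \<Rightarrow> (nat \<times> nat) set" where
  "unshift_nest d \<nu> = (\<lambda>(i, j). (i - d, j - d)) ` \<nu>"

definition wrap_nest :: "nat \<Rightarrow> (nat \<times> nat) set \<Rightarrow> (nat \<times> nat) set" where
  "wrap_nest m \<nu> = insert (1, m + 2) (shift_nest 1 \<nu>)"

lemma mem_shift_nest: "(a, b) \<in> shift_nest d \<nu> \<longleftrightarrow> d \<le> a \<and> d \<le> b \<and> (a - d, b - d) \<in> \<nu>"
  unfolding shift_nest_def by force

lemma nestingI: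
  assumes "\<And>i j. (i, j) \<in> \<nu> \<Longrightarrow> 1 \<le> i \<and> i < j \<and> j \<le> n"
    and "\<And>i j j'. (i, j) \<in> \<nu> \<Longrightarrow> (i, j') \<in> \<nu> \<Longrightarrow> j = j'"
    and "\<And>i i' j. (i, j) \<in> \<nu> \<Longrightarrow> (i', j) \<in> \<nu> \<Longrightarrow> i = i'"
    and "\<And>i j i' j'. (i, j) \<in> \<nu> \<Longrightarrow> (i', j') \<in> \<nu> \<Longrightarrow> i < i' \<Longrightarrow> j < i' \<or> j' < j"
  shows "nesting n \<nu>"
  unfolding nesting_def
proof (intro conjI allI impI subsetI)
  fix x assume "x \<in> \<nu>"
  then show "x \<in> {1..n} \<times> {1..n}" using assms(1)[of "fst x" "snd x"] by (cases x) auto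
qed (use assms in blast)+

lemma nestingD:
  assumes "nesting n \<nu>"
  shows "\<And>i j. (i, j) \<in> \<nu> \<Longrightarrow> 1 \<le> i \<and> i < j \<and> j \<le> n"
    and "\<And>i j j'. (i, j) \<in> \<nu> \<Longrightarrow> (i, j') \<in> \<nu> \<Longrightarrow> j = j'"
    and "\<And>i i' j. (i, j) \<in> \<nu> \<Longrightarrow> (i', j) \<in> \<nu> \<Longrightarrow> i = i'"
    and "\<And>i j i' j'. (i, j) \<in> \<nu> \<Longrightarrow> (i', j') \<in> \<nu> \<Longrightarrow> i < i' \<Longrightarrow> j < i' \<or> j' < j"
  using assms unfolding nesting_def by auto

lemma nesting_empty: "nesting n {}"
  by (rule nestingI) auto

lemma nesting_0_iff: "nesting 0 \<nu> \<longleftrightarrow> \<nu> = {}"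
  using nestingD(1)[of 0 \<nu>] nesting_empty by fastforce

lemma nesting_subset: "nesting n \<nu> \<Longrightarrow> \<nu>' \<subseteq> \<nu> \<Longrightarrow> nesting n \<nu>'"
  unfolding nesting_def by (meson subset_iff order_trans)

lemma finite_nestings: "finite {\<nu>. nesting n \<nu>}"
proof (rule finite_subset)
  show "{\<nu>. nesting n \<nu>} \<subseteq> Pow ({1..n} \<times> {1..n})" unfolding nesting_def by blast
qed simp

lemma call_of_eqI:
  assumes "nesting n \<nu>" "(i, j) \<in> \<nu>"
  shows "call_of \<nu> j = i"
  unfolding call_of_def using nestingD(3)[OF assms(1)] assms(2) by blast

lemma nesting_append:
  assumes "nesting n1 \<nu>1" "nesting n2 \<nu>2"
  shows "nesting (n1 + n2) (\<nu>1 \<union> shift_nest n1 \<nu>2)"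
proof (rule nestingI)
  note A = nestingD[OF assms(1)] and B = nestingD[OF assms(2)]
  let ?U = "\<nu>1 \<union> shift_nest n1 \<nu>2"
  have U: "(i, j) \<in> ?U \<longleftrightarrow> (i, j) \<in> \<nu>1 \<or> (n1 < i \<and> n1 < j \<and> (i - n1, j - n1) \<in> \<nu>2)" for i j
    using B(1)[of "i - n1" "j - n1"] by (auto simp: mem_shift_nest)
  show "1 \<le> i \<and> i < j \<and> j \<le> n1 + n2" if "(i, j) \<in> ?U" for i j
    using that A(1)[of i j] B(1)[of "i - n1" "j - n1"] unfolding U by auto
  show "j = j'" if "(i, j) \<in> ?U" "(i, j') \<in> ?U" for i j j'
    using that A(1)[of i j] A(1)[of i j'] A(2)[of i j j'] B(2)[of "i - n1" "j - n1" "j' - n1"]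
    unfolding U by (auto simp: diff_diff_cancel)
  show "i = i'" if "(i, j) \<in> ?U" "(i', j) \<in> ?U" for i i' j
    using that A(1)[of i j] A(1)[of i' j] A(3)[of i j i'] B(3)[of "i - n1" "j - n1" "i' - n1"]
    unfolding U by auto
  show "j < i' \<or> j' < j" if "(i, j) \<in> ?U" "(i', j') \<in> ?U" "i < i'" for i j i' j'
    using that A(1)[of i j] A(1)[of i' j'] A(4)[of i j i' j'] B(4)[of "i - n1" "j - n1" "i' - n1" "j' - n1"] diff_less_mono[of i i' n1]
    unfolding U by auto
qed

lemma nesting_shift_nest: "nesting n \<nu> \<Longrightarrow> nesting (Suc n) (shift_nest 1 \<nu>)"
  using nesting_append[OF nesting_empty[of 1]] by simp

lemma mem_wrap_nest:
  assumes "nesting m \<nu>"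
  shows "(i, j) \<in> wrap_nest m \<nu> \<longleftrightarrow> (i = 1 \<and> j = m + 2) \<or> (1 < i \<and> 1 < j \<and> (i - 1, j - 1) \<in> \<nu>)"
  using nestingD(1)[OF assms, of "i - 1" "j - 1"] unfolding wrap_nest_def by (auto simp: mem_shift_nest)

lemma nesting_wrap_nest:
  assumes "nesting m \<nu>"
  shows "nesting (m + 2) (wrap_nest m \<nu>)"
proof (rule nestingI)
  note A = nestingD[OF assms] and W = mem_wrap_nest[OF assms]
  show "1 \<le> i \<and> i < j \<and> j \<le> m + 2" if "(i, j) \<in> wrap_nest m \<nu>" for i j
    using that A(1)[of "i - 1" "j - 1"] unfolding W by auto
  show "j = j'" if "(i, j) \<in> wrap_nest m \<nu>" "(i, j') \<in> wrap_nest m \<nu>" for i j j'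
    using that A(2)[of "i - 1" "j - 1" "j' - 1"] unfolding W by auto
  show "i = i'" if "(i, j) \<in> wrap_nest m \<nu>" "(i', j) \<in> wrap_nest m \<nu>" for i i' j
    using that A(1)[of "i - 1" "j - 1"] A(1)[of "i' - 1" "j - 1"] A(3)[of "i - 1" "j - 1" "i' - 1"]
    unfolding W by auto
  show "j < i' \<or> j' < j" if "(i, j) \<in> wrap_nest m \<nu>" "(i', j') \<in> wrap_nest m \<nu>" "i < i'" for i j i' j'
    using that A(1)[of "i - 1" "j - 1"] A(1)[of "i' - 1" "j' - 1"] A(4)[of "i - 1" "j - 1" "i' - 1" "j' - 1"] diff_less_mono[of i i' 1]
    unfolding W by auto
qed

lemma is_call_append_le:
  assumes "nesting n1 \<nu>1" "nesting n2 \<nu>2" "j \<le> n1"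
  shows "is_call (\<nu>1 \<union> shift_nest n1 \<nu>2) j \<longleftrightarrow> is_call \<nu>1 j"
    "is_return (\<nu>1 \<union> shift_nest n1 \<nu>2) j \<longleftrightarrow> is_return \<nu>1 j"
  using assms nestingD(1)[OF assms(2)] unfolding is_call_def is_return_def
  by (auto simp: mem_shift_nest)

lemma is_call_append_gt:
  assumes "nesting n1 \<nu>1" "nesting n2 \<nu>2" "n1 < j"
  shows "is_call (\<nu>1 \<union> shift_nest n1 \<nu>2) j \<longleftrightarrow> is_call \<nu>2 (j - n1)"
    "is_return (\<nu>1 \<union> shift_nest n1 \<nu>2) j \<longleftrightarrow> is_return \<nu>2 (j - n1)"
proof -
  note A = nestingD(1)[OF assms(1)]
  show "is_call (\<nu>1 \<union> shift_nest n1 \<nu>2) j \<longleftrightarrow> is_call \<nu>2 (j - n1)"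
  proof
    assume "is_call (\<nu>1 \<union> shift_nest n1 \<nu>2) j"
    then obtain k where "(j,k) \<in> \<nu>1 \<union> shift_nest n1 \<nu>2" unfolding is_call_def by blast
    then show "is_call \<nu>2 (j - n1)" using A[of j k] assms(3) unfolding is_call_def by (auto simp: mem_shift_nest)
  next
    assume "is_call \<nu>2 (j - n1)"
    then obtain k where "(j - n1, k) \<in> \<nu>2" unfolding is_call_def by blast
    then have "(j, k + n1) \<in> shift_nest n1 \<nu>2" using assms(3) by (auto simp: mem_shift_nest)
    then show "is_call (\<nu>1 \<union> shift_nest n1 \<nu>2) j" unfolding is_call_def by blast
  qed
  show "is_return (\<nu>1 \<union> shift_nest n1 \<nu>2) j \<longleftrightarrow> is_return \<nu>2 (j - n1)"
  proof
    assume "is_return (\<nu>1 \<union> shift_nest n1 \<nu>2) j"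
    then obtain k where "(k,j) \<in> \<nu>1 \<union> shift_nest n1 \<nu>2" unfolding is_return_def by blast
    then show "is_return \<nu>2 (j - n1)" using A[of k j] assms(3) unfolding is_return_def by (auto simp: mem_shift_nest)
  next
    assume "is_return \<nu>2 (j - n1)"
    then obtain k where "(k, j - n1) \<in> \<nu>2" unfolding is_return_def by blast
    then have "(k + n1, j) \<in> shift_nest n1 \<nu>2" using assms(3) by (auto simp: mem_shift_nest)
    then show "is_return (\<nu>1 \<union> shift_nest n1 \<nu>2) j" unfolding is_return_def by blast
  qed
qed

lemma pos_weight_append_le:
  assumes "nesting n1 \<nu>1" "nesting n2 \<nu>2" "length w1 = n1" "1 \<le> j" "j \<le> n1" "n1 < length r"
  shows "pos_weight dc di dr (w1 @ w2, \<nu>1 \<union> shift_nest n1 \<nu>2) r j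
       = pos_weight dc di dr (w1, \<nu>1) (take (Suc n1) r) j"
proof -
  let ?U = "\<nu>1 \<union> shift_nest n1 \<nu>2"
  have U: "nesting (n1+n2) ?U" using nesting_append[OF assms(1,2)] .
  note ic = is_call_append_le[OF assms(1,2,5)]
  have co: "call_of ?U j = call_of \<nu>1 j \<and> call_of \<nu>1 j < j \<and> 1 \<le> call_of \<nu>1 j" if R: "is_return \<nu>1 j"
  proof -
    obtain i where i: "(i,j) \<in> \<nu>1" using R unfolding is_return_def by blast
    then show ?thesis using call_of_eqI[OF U, of i j] call_of_eqI[OF assms(1) i] nestingD(1)[OF assms(1) i] by auto
  qed
  have "j - 1 < n1" using assms by arith
  then have w: "(w1 @ w2) ! (j - 1) = w1 ! (j - 1)" using assms by (simp add: nth_append)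
  show ?thesis unfolding pos_weight_def Let_def fst_conv snd_conv ic w
    using co assms by (auto simp: nth_take)
qed

lemma pos_weight_append_gt:
  assumes "nesting n1 \<nu>1" "nesting n2 \<nu>2" "length w1 = n1" "n1 < j" "j \<le> n1 + n2" "length r = Suc (n1 + n2)"
  shows "pos_weight dc di dr (w1 @ w2, \<nu>1 \<union> shift_nest n1 \<nu>2) r j
       = pos_weight dc di dr (w2, \<nu>2) (drop n1 r) (j - n1)"
proof -
  let ?U = "\<nu>1 \<union> shift_nest n1 \<nu>2"
  have U: "nesting (n1+n2) ?U" using nesting_append[OF assms(1,2)] .
  note ic = is_call_append_gt[OF assms(1,2,4)]
  have co: "call_of ?U j = call_of \<nu>2 (j - n1) + n1 \<and> 1 \<le> call_of \<nu>2 (j - n1)" if R: "is_return \<nu>2 (j - n1)"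
  proof -
    obtain i where i: "(i,j - n1) \<in> \<nu>2" using R unfolding is_return_def by blast
    then have "(i + n1, j) \<in> ?U" using assms(4) by (auto simp: mem_shift_nest)
    then show ?thesis using call_of_eqI[OF U, of "i+n1" j] call_of_eqI[OF assms(2) i] nestingD(1)[OF assms(2) i] by auto
  qed
  have "\<not> j - 1 < n1" "j - 1 - n1 = j - n1 - 1" using assms by arith+
  then have w: "(w1 @ w2) ! (j - 1) = w2 ! (j - n1 - 1)" using assms by (simp add: nth_append)
  have r: "r ! k = drop n1 r ! (k - n1)" if "n1 \<le> k" "k < length r" for k
    using that by simp
  show ?thesis unfolding pos_weight_def Let_def fst_conv snd_conv ic w
    using co assms r by (auto simp: Suc_diff_le add.commute)
qed

definition run_weight where
  "run_weight dc di dr \<nu> w r = (\<Prod>j\<in>{1..length w}. pos_weight dc di dr (w,\<nu>) r j)"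

definition runs_weight where
  "runs_weight Q dc di dr \<nu> w p q = (\<Sum>r\<in>{r\<in>runs Q (length w). r!0 = p \<and> r!length w = q}. run_weight dc di dr \<nu> w r)"

lemma finite_runs: "finite Q \<Longrightarrow> finite (runs Q n)"
  unfolding runs_def using finite_lists_length_eq[of Q "Suc n"] by (simp add: conj_commute)

lemma run_weight_append:
  assumes "nesting n1 \<nu>1" "nesting n2 \<nu>2" "length w1 = n1" "length w2 = n2" "length r = Suc (n1 + n2)"
  shows "run_weight dc di dr (\<nu>1 \<union> shift_nest n1 \<nu>2) (w1 @ w2) r
       = run_weight dc di dr \<nu>1 w1 (take (Suc n1) r) * run_weight dc di dr \<nu>2 w2 (drop n1 r)"
proof -
  have split: "{1..n1+n2} = {1..n1} \<union> {n1+1..n1+n2}" by auto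
  have "run_weight dc di dr (\<nu>1 \<union> shift_nest n1 \<nu>2) (w1 @ w2) r
     = (\<Prod>j\<in>{1..n1}. pos_weight dc di dr (w1 @ w2, \<nu>1 \<union> shift_nest n1 \<nu>2) r j)
     * (\<Prod>j\<in>{n1+1..n1+n2}. pos_weight dc di dr (w1 @ w2, \<nu>1 \<union> shift_nest n1 \<nu>2) r j)"
    unfolding run_weight_def using assms by (simp only: length_append, subst split, intro prod.union_disjoint) auto
  also have "(\<Prod>j\<in>{1..n1}. pos_weight dc di dr (w1 @ w2, \<nu>1 \<union> shift_nest n1 \<nu>2) r j)
      = run_weight dc di dr \<nu>1 w1 (take (Suc n1) r)"
    unfolding run_weight_def using assms by (intro prod.cong refl pos_weight_append_le) auto
  also have "(\<Prod>j\<in>{n1+1..n1+n2}. pos_weight dc di dr (w1 @ w2, \<nu>1 \<union> shift_nest n1 \<nu>2) r j)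
      = (\<Prod>j\<in>{n1+1..n1+n2}. pos_weight dc di dr (w2, \<nu>2) (drop n1 r) (j - n1))"
    using assms by (intro prod.cong refl pos_weight_append_gt) auto
  also have "\<dots> = run_weight dc di dr \<nu>2 w2 (drop n1 r)"
    unfolding run_weight_def using assms
    by (intro prod.reindex_bij_witness[of _ "\<lambda>j. j+n1" "\<lambda>j. j-n1"]) auto
  finally show ?thesis .
qed

lemma bij_betw_glue_runs:
  "bij_betw (\<lambda>(r1, r2). r1 @ tl r2)
     ({r\<in>runs Q n1. r ! 0 = p \<and> r ! n1 = m} \<times> {r\<in>runs Q n2. r ! 0 = m \<and> r ! n2 = q})
     {r\<in>runs Q (n1 + n2). r ! 0 = p \<and> r ! (n1 + n2) = q \<and> r ! n1 = m}"
    (is "bij_betw ?glue (?R1 \<times> ?R2) ?R")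
proof (rule bij_betw_byWitness[where f' = "\<lambda>r. (take (Suc n1) r, drop n1 r)"])
  have glued: "take (Suc n1) (r1 @ tl r2) = r1 \<and> drop n1 (r1 @ tl r2) = r2 \<and> r1 @ tl r2 \<in> ?R"
    if "r1 \<in> ?R1" "r2 \<in> ?R2" for r1 r2
  proof -
    from that have l1: "length r1 = Suc n1" "r1 ! n1 = m" and l2: "length r2 = Suc n2" "r2 ! 0 = m"
      by (auto simp: runs_def)
    then obtain t where r2: "r2 = m # t" by (cases r2) auto
    have "drop n1 r1 = [m]" using l1 by (metis Cons_nth_drop_Suc drop_all le_refl lessI)
    with l1 l2 that show ?thesis unfolding r2 by (auto simp: runs_def nth_append)
  qed
  then show "\<forall>x\<in>?R1 \<times> ?R2. (\<lambda>r. (take (Suc n1) r, drop n1 r)) (?glue x) = x" "?glue ` (?R1 \<times> ?R2) \<subseteq> ?R"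
    by auto
  show "\<forall>r\<in>?R. ?glue (take (Suc n1) r, drop n1 r) = r"
    by (auto simp: runs_def tl_drop) (metis append_take_drop_id drop_Suc)
  show "(\<lambda>r. (take (Suc n1) r, drop n1 r)) ` ?R \<subseteq> ?R1 \<times> ?R2"
    by (auto simp: runs_def dest: in_set_takeD in_set_dropD)
qed

lemma runs_weight_append:
  fixes dc di :: "nat \<Rightarrow> 'a \<Rightarrow> nat \<Rightarrow> 'k::comm_semiring_1"
  assumes Q: "finite Q" and "nesting n1 \<nu>1" "nesting n2 \<nu>2" "length w1 = n1" "length w2 = n2"
  shows "runs_weight Q dc di dr (\<nu>1 \<union> shift_nest n1 \<nu>2) (w1 @ w2) p q
       = (\<Sum>m\<in>Q. runs_weight Q dc di dr \<nu>1 w1 p m * runs_weight Q dc di dr \<nu>2 w2 m q)"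
proof -
  let ?W = "run_weight dc di dr (\<nu>1 \<union> shift_nest n1 \<nu>2) (w1 @ w2)"
  have glue: "drop n r1 @ tl r2 = r2" if "length r1 = Suc n" "length r2 = Suc k" "r2 ! 0 = r1 ! n"
    for n k and r1 r2 :: "nat list"
    using that by (cases r2) (simp_all add: Cons_nth_drop_Suc[symmetric])
  let ?R = "{r\<in>runs Q (n1 + n2). r ! 0 = p \<and> r ! (n1 + n2) = q}"
  have "runs_weight Q dc di dr (\<nu>1 \<union> shift_nest n1 \<nu>2) (w1 @ w2) p q = sum ?W ?R"
    unfolding runs_weight_def using assms by simp
  also have "\<dots> = (\<Sum>m\<in>Q. \<Sum>r\<in>{r\<in>?R. r ! n1 = m}. ?W r)"
  proof (rule sum.group[symmetric])
    show "finite ?R" using finite_runs[OF Q, of "n1 + n2"] by simp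
  qed (use Q in \<open>auto simp: runs_def\<close>)
  also have "\<dots> = (\<Sum>m\<in>Q. \<Sum>(r1, r2)\<in>{r\<in>runs Q n1. r ! 0 = p \<and> r ! n1 = m} \<times> {r\<in>runs Q n2. r ! 0 = m \<and> r ! n2 = q}.
      ?W (r1 @ tl r2))"
    using sum.reindex_bij_betw[OF bij_betw_glue_runs, of ?W] by (simp add: conj_assoc split_def)
  also have "\<dots> = (\<Sum>m\<in>Q. runs_weight Q dc di dr \<nu>1 w1 p m * runs_weight Q dc di dr \<nu>2 w2 m q)"
    unfolding runs_weight_def sum_product sum.cartesian_product using assms
    by (intro sum.cong refl) (auto simp: runs_def run_weight_append glue)
  finally show ?thesis .
qed

lemma wrap_nest_inner:
  assumes "nesting m \<nu>" "2 \<le> j" "j \<le> Suc m"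
  shows "is_call (wrap_nest m \<nu>) j \<longleftrightarrow> is_call \<nu> (j - 1)"
    and "is_return (wrap_nest m \<nu>) j \<longleftrightarrow> is_return \<nu> (j - 1)"
    and "is_return \<nu> (j - 1) \<Longrightarrow> call_of (wrap_nest m \<nu>) j = call_of \<nu> (j - 1) + 1
           \<and> 1 \<le> call_of \<nu> (j - 1) \<and> call_of \<nu> (j - 1) < j - 1"
proof -
  note W = mem_wrap_nest[OF assms(1)] and A = nestingD(1)[OF assms(1)]
  have call: "(j, k) \<in> wrap_nest m \<nu> \<longleftrightarrow> 1 < k \<and> (j - 1, k - 1) \<in> \<nu>" for k
    using assms(2) unfolding W by auto
  have ret: "(i, j) \<in> wrap_nest m \<nu> \<longleftrightarrow> 1 < i \<and> (i - 1, j - 1) \<in> \<nu>" for i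
    using assms unfolding W by auto
  show "is_call (wrap_nest m \<nu>) j \<longleftrightarrow> is_call \<nu> (j - 1)"
  proof
    assume "is_call \<nu> (j - 1)"
    then obtain k where "(j - 1, k) \<in> \<nu>" unfolding is_call_def by blast
    with A[OF this] have "(j, k + 1) \<in> wrap_nest m \<nu>" unfolding call by simp
    then show "is_call (wrap_nest m \<nu>) j" unfolding is_call_def by blast
  qed (auto simp: is_call_def call)
  show "is_return (wrap_nest m \<nu>) j \<longleftrightarrow> is_return \<nu> (j - 1)"
  proof
    assume "is_return \<nu> (j - 1)"
    then obtain i where "(i, j - 1) \<in> \<nu>" unfolding is_return_def by blast
    with A[OF this] have "(i + 1, j) \<in> wrap_nest m \<nu>" unfolding ret by simp
    then show "is_return (wrap_nest m \<nu>) j" unfolding is_return_def by blast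
  qed (auto simp: is_return_def ret)
  assume "is_return \<nu> (j - 1)"
  then obtain i where i: "(i, j - 1) \<in> \<nu>" unfolding is_return_def by blast
  with A[OF i] have "(i + 1, j) \<in> wrap_nest m \<nu>" unfolding ret by auto
  then show "call_of (wrap_nest m \<nu>) j = call_of \<nu> (j - 1) + 1 \<and> 1 \<le> call_of \<nu> (j - 1) \<and> call_of \<nu> (j - 1) < j - 1"
    using call_of_eqI[OF nesting_wrap_nest[OF assms(1)]] call_of_eqI[OF assms(1) i] A[OF i] by auto
qed

lemma wrap_nest_outer:
  assumes "nesting m \<nu>"
  shows "is_call (wrap_nest m \<nu>) 1" "\<not> is_call (wrap_nest m \<nu>) (m + 2)"
    "is_return (wrap_nest m \<nu>) (m + 2)" "call_of (wrap_nest m \<nu>) (m + 2) = 1"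
  using nestingD(1)[OF assms] call_of_eqI[OF nesting_wrap_nest[OF assms], of 1 "m + 2"]
  unfolding is_call_def is_return_def mem_wrap_nest[OF assms] by force+

lemma pos_weight_wrap_inner:
  assumes "nesting m \<nu>" "length u = m" "length R' = Suc m" "2 \<le> j" "j \<le> Suc m"
  shows "pos_weight dc di dr (a # u @ [b], wrap_nest m \<nu>) (p # R' @ [q]) j = pos_weight dc di dr (u, \<nu>) R' (j - 1)"
proof -
  have idx: "(p # R' @ [q]) ! k = R' ! (k - 1)" if "1 \<le> k" "k \<le> Suc m" for k
    using that assms(3) by (cases k) (auto simp: nth_append)
  have "(a # u @ [b]) ! (j - 1) = u ! (j - 1 - 1)"
    using assms by (cases j) (auto simp: nth_append)
  then show ?thesis
    unfolding pos_weight_def Let_def fst_conv snd_conv wrap_nest_inner(1,2)[OF assms(1,4,5)]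
    using wrap_nest_inner(3)[OF assms(1,4,5)] assms idx[of j] idx[of "j - 1"] idx[of "call_of \<nu> (j - 1) + 1 - 1"]
    by auto
qed

lemma run_weight_wrap:
  assumes "nesting m \<nu>" "length u = m" "length R' = Suc m"
  shows "run_weight dc di dr (wrap_nest m \<nu>) (a # u @ [b]) (p # R' @ [q])
       = dc p a (R' ! 0) * run_weight dc di dr \<nu> u R' * dr (R' ! m) p b q"
proof -
  let ?f = "pos_weight dc di dr (a # u @ [b], wrap_nest m \<nu>) (p # R' @ [q])"
  have "{1..length (a # u @ [b])} = insert 1 (insert (m + 2) {2..m + 1})" using assms(2) by auto
  then have "run_weight dc di dr (wrap_nest m \<nu>) (a # u @ [b]) (p # R' @ [q]) = ?f 1 * ?f (m + 2) * prod ?f {2..m + 1}"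
    unfolding run_weight_def by (simp add: mult.assoc)
  moreover have "?f 1 = dc p a (R' ! 0)" "?f (m + 2) = dr (R' ! m) p b q"
    unfolding pos_weight_def Let_def using wrap_nest_outer[OF assms(1)] assms by (simp_all add: nth_append)
  moreover have "prod ?f {2..m + 1} = (\<Prod>j\<in>{2..m + 1}. pos_weight dc di dr (u, \<nu>) R' (j - 1))"
    using assms by (intro prod.cong refl pos_weight_wrap_inner) auto
  moreover have "\<dots> = run_weight dc di dr \<nu> u R'"
    unfolding run_weight_def using assms
    by (intro prod.reindex_bij_witness[of _ "\<lambda>j. j + 1" "\<lambda>j. j - 1"]) auto
  ultimately show ?thesis by (simp add: ac_simps)
qed

lemma runs_weight_wrap:
  fixes dc di :: "nat \<Rightarrow> 'a \<Rightarrow> nat \<Rightarrow> 'k::comm_semiring_1"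
  assumes Q: "finite Q" and pq: "p \<in> Q" "q \<in> Q" and "nesting m \<nu>" "length u = m"
  shows "runs_weight Q dc di dr (wrap_nest m \<nu>) (a # u @ [b]) p q
       = (\<Sum>r\<in>Q. \<Sum>s\<in>Q. dc p a r * runs_weight Q dc di dr \<nu> u r s * dr s p b q)"
proof -
  let ?h = "\<lambda>R'. dc p a (R'!0) * run_weight dc di dr \<nu> u R' * dr (R'!m) p b q"
  have "(\<Sum>r\<in>Q. \<Sum>s\<in>Q. dc p a r * runs_weight Q dc di dr \<nu> u r s * dr s p b q)
      = (\<Sum>r\<in>Q. \<Sum>s\<in>Q. \<Sum>R'\<in>{R'\<in>runs Q m. R'!0 = r \<and> R'!m = s}. ?h R')"
    unfolding runs_weight_def using assms(5) by (simp add: sum_distrib_left sum_distrib_right)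
  also have "\<dots> = (\<Sum>rs\<in>Q \<times> Q. \<Sum>R'\<in>{R'\<in>runs Q m. (R'!0, R'!m) = rs}. ?h R')"
    unfolding sum.cartesian_product by (intro sum.cong refl) auto
  also have "\<dots> = (\<Sum>R'\<in>runs Q m. ?h R')"
    by (rule sum.group) (use Q finite_runs[OF Q] in \<open>auto simp: runs_def\<close>)
  also have "\<dots> = runs_weight Q dc di dr (wrap_nest m \<nu>) (a # u @ [b]) p q"
    unfolding runs_weight_def
  proof (rule sum.reindex_bij_witness[of _ "\<lambda>R. butlast (tl R)" "\<lambda>R'. p # R' @ [q]"])
    fix R' assume R': "R' \<in> runs Q m"
    then have l: "length R' = Suc m" by (simp add: runs_def)
    show "butlast (tl (p # R' @ [q])) = R'" by simp
    show "p # R' @ [q] \<in> {r \<in> runs Q (length (a # u @ [b])). r ! 0 = p \<and> r ! length (a # u @ [b]) = q}"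
      using R' l pq assms(5) by (auto simp: runs_def nth_append)
    show "run_weight dc di dr (wrap_nest m \<nu>) (a # u @ [b]) (p # R' @ [q]) = ?h R'"
      by (rule run_weight_wrap[OF assms(4,5) l])
  next
    fix R assume R: "R \<in> {r \<in> runs Q (length (a # u @ [b])). r ! 0 = p \<and> r ! length (a # u @ [b]) = q}"
    then have l: "length R = m + 3" and e: "R!0 = p" "R!(m+2) = q" and s: "set R \<subseteq> Q"
      using assms(5) by (auto simp: runs_def)
    obtain x R1 where R1: "R = x # R1" using l by (cases R) auto
    have l1: "length R1 = m + 2" using l R1 by simp
    then have "R1 \<noteq> []" by auto
    then have "R1 = butlast R1 @ [last R1]" by simp
    moreover have "last R1 = q" using e l1 R1 last_conv_nth[of R1] by (cases R1) auto
    ultimately show "p # butlast (tl R) @ [q] = R" using R1 e by simp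
    show "butlast (tl R) \<in> runs Q m" using l s R1 by (auto simp: runs_def dest: in_set_butlastD)
  qed
  finally show ?thesis ..
qed

lemma runs_weight_single:
  assumes "p \<in> Q" "q \<in> Q"
  shows "runs_weight Q dc di dr {} [a] p q = di p a q"
proof -
  have "{r \<in> runs Q (length [a]). r ! 0 = p \<and> r ! length [a] = q} = {[p,q]}"
  proof (intro set_eqI iffI)
    fix r assume "r \<in> {r \<in> runs Q (length [a]). r ! 0 = p \<and> r ! length [a] = q}"
    then have "length r = 2" "r!0 = p" "r!1 = q" by (auto simp: runs_def)
    then show "r \<in> {[p,q]}" by (cases r; cases "tl r") auto
  qed (use assms in \<open>auto simp: runs_def\<close>)
  moreover have "run_weight dc di dr {} [a] [p,q] = di p a q"
    unfolding run_weight_def pos_weight_def is_call_def is_return_def by simp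
  ultimately show ?thesis unfolding runs_weight_def by simp
qed

lemma runs_weight_Nil:
  assumes "p \<in> Q"
  shows "runs_weight Q dc di dr \<nu> [] p q = (if p = q then 1 else 0)"
proof -
  have rr: "r \<in> runs Q 0 \<longleftrightarrow> (\<exists>x\<in>Q. r = [x])" for r
    by (cases r) (auto simp: runs_def)
  have "{r \<in> runs Q (length []). r ! 0 = p \<and> r ! length [] = q} = (if p = q then {[p]} else {})"
    using assms by (auto simp: rr)
  then show ?thesis unfolding runs_weight_def run_weight_def by simp
qed

section \<open>Decomposing a nesting at its first position\<close>

lemma mem_unshift_nest:
  assumes "\<forall>(a,b)\<in>\<nu>. d \<le> a \<and> d \<le> b"
  shows "(x,y) \<in> unshift_nest d \<nu> \<longleftrightarrow> (x+d, y+d) \<in> \<nu>"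
proof
  assume "(x,y) \<in> unshift_nest d \<nu>"
  then obtain a b where "(a,b) \<in> \<nu>" "x = a - d" "y = b - d" unfolding unshift_nest_def by auto
  with assms show "(x+d, y+d) \<in> \<nu>" by auto
next
  assume "(x+d, y+d) \<in> \<nu>"
  then show "(x,y) \<in> unshift_nest d \<nu>" unfolding unshift_nest_def by (auto intro!: image_eqI[where x="(x+d,y+d)"])
qed

lemma unshift_shift_nest: "unshift_nest d (shift_nest d \<nu>) = \<nu>"
proof (intro set_eqI)
  fix z :: "nat \<times> nat" obtain x y where z: "z = (x,y)" by (cases z)
  have "\<forall>(a,b)\<in>shift_nest d \<nu>. d \<le> a \<and> d \<le> b" by (auto simp: mem_shift_nest)
  from mem_unshift_nest[OF this] show "z \<in> unshift_nest d (shift_nest d \<nu>) \<longleftrightarrow> z \<in> \<nu>"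
    unfolding z by (simp add: mem_shift_nest)
qed

lemma shift_unshift_nest:
  assumes "\<forall>(a,b)\<in>\<nu>. d \<le> a \<and> d \<le> b"
  shows "shift_nest d (unshift_nest d \<nu>) = \<nu>"
proof (intro set_eqI)
  fix z :: "nat \<times> nat" obtain x y where z: "z = (x,y)" by (cases z)
  show "z \<in> shift_nest d (unshift_nest d \<nu>) \<longleftrightarrow> z \<in> \<nu>"
    unfolding z mem_shift_nest mem_unshift_nest[OF assms] using assms by auto
qed

lemma nesting_unshift_nest:
  assumes N: "nesting M \<nu>" and B: "\<forall>(a,b)\<in>\<nu>. d < a \<and> b \<le> d + n"
  shows "nesting n (unshift_nest d \<nu>)"
proof -
  have B': "\<forall>(a,b)\<in>\<nu>. d \<le> a \<and> d \<le> b" using B nestingD(1)[OF N] by fastforce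
  note mu = mem_unshift_nest[OF B']
  note A = nestingD[OF N]
  show ?thesis
  proof (rule nestingI)
    fix i j assume "(i,j) \<in> unshift_nest d \<nu>"
    then have "(i+d, j+d) \<in> \<nu>" by (simp add: mu)
    then show "1 \<le> i \<and> i < j \<and> j \<le> n" using A(1)[of "i+d" "j+d"] B by auto
  next
    fix i j j' assume "(i,j) \<in> unshift_nest d \<nu>" "(i,j') \<in> unshift_nest d \<nu>"
    then show "j = j'" using A(2)[of "i+d" "j+d" "j'+d"] by (simp add: mu)
  next
    fix i i' j assume "(i,j) \<in> unshift_nest d \<nu>" "(i',j) \<in> unshift_nest d \<nu>"
    then show "i = i'" using A(3)[of "i+d" "j+d" "i'+d"] by (simp add: mu)
  next
    fix i j i' j' assume "(i,j) \<in> unshift_nest d \<nu>" "(i',j') \<in> unshift_nest d \<nu>" "i < i'"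
    then show "j < i' \<or> j' < j" using A(4)[of "i+d" "j+d" "i'+d" "j'+d"] by (simp add: mu)
  qed
qed

text \<open>The parts of a nesting lying strictly inside and strictly after a call at position \<open>1\<close> that is
  matched with position \<open>j + 2\<close>.\<close>

definition inner_nest :: "nat \<Rightarrow> (nat \<times> nat) set \<Rightarrow> (nat \<times> nat) set" where
  "inner_nest j \<nu> = {(a,b)\<in>\<nu>. 2 \<le> a \<and> b \<le> j+1}"
definition outer_nest :: "nat \<Rightarrow> (nat \<times> nat) set \<Rightarrow> (nat \<times> nat) set" where
  "outer_nest j \<nu> = {(a,b)\<in>\<nu>. j+3 \<le> a}"

lemma nesting_first_call_split:
  assumes N: "nesting (Suc n) \<nu>" and c: "(1, j+2) \<in> \<nu>" and j: "j < n"
  shows "\<nu> = wrap_nest j (unshift_nest 1 (inner_nest j \<nu>)) \<union> shift_nest (j+2) (unshift_nest (j+2) (outer_nest j \<nu>))"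
    "nesting j (unshift_nest 1 (inner_nest j \<nu>))"
    "nesting (n - Suc j) (unshift_nest (j+2) (outer_nest j \<nu>))"
proof -
  note A = nestingD[OF N]
  have b1: "\<forall>(a,b)\<in>inner_nest j \<nu>. 1 \<le> a \<and> 1 \<le> b" unfolding inner_nest_def using A(1) by fastforce
  have b2: "\<forall>(a,b)\<in>outer_nest j \<nu>. j+2 \<le> a \<and> j+2 \<le> b" unfolding outer_nest_def using A(1) by fastforce
  have cls: "(a,b) \<in> \<nu> \<Longrightarrow> (a = 1 \<and> b = j+2) \<or> (a,b) \<in> inner_nest j \<nu> \<or> (a,b) \<in> outer_nest j \<nu>" for a b
  proof -
    assume ab: "(a,b) \<in> \<nu>"
    have "a \<ge> 1" "a < b" using A(1)[OF ab] by auto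
    consider "a = 1" | "2 \<le> a" "a \<le> j+1" | "a = j+2" | "j+3 \<le> a" using \<open>a \<ge> 1\<close> by atomize_elim arith
    then show ?thesis
    proof cases
      case 1 then show ?thesis using A(2)[OF c] ab by auto
    next
      case 2
      have "j + 2 < a \<or> b < j + 2" using A(4)[OF c ab] 2 by auto
      then show ?thesis using 2 unfolding inner_nest_def using ab by auto
    next
      case 3
      have "j + 2 < a \<or> b < j + 2" using A(4)[OF c ab] 3 by auto
      then show ?thesis using 3 \<open>a < b\<close> by auto
    next
      case 4 then show ?thesis unfolding outer_nest_def using ab by auto
    qed
  qed
  show "\<nu> = wrap_nest j (unshift_nest 1 (inner_nest j \<nu>)) \<union> shift_nest (j+2) (unshift_nest (j+2) (outer_nest j \<nu>))"
    unfolding wrap_nest_def shift_unshift_nest[OF b1] shift_unshift_nest[OF b2]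
    using cls c unfolding inner_nest_def outer_nest_def by auto
  show "nesting j (unshift_nest 1 (inner_nest j \<nu>))"
    by (rule nesting_unshift_nest[OF nesting_subset[OF N]]) (auto simp: inner_nest_def)
  show "nesting (n - Suc j) (unshift_nest (j+2) (outer_nest j \<nu>))"
    by (rule nesting_unshift_nest[OF nesting_subset[OF N]]) (use A(1) j in \<open>auto simp: outer_nest_def\<close>)
qed

lemma inner_outer_nest_split:
  assumes N1: "nesting j \<nu>1" and N2: "nesting k \<nu>2"
  shows "inner_nest j (wrap_nest j \<nu>1 \<union> shift_nest (j+2) \<nu>2) = shift_nest 1 \<nu>1"
    "outer_nest j (wrap_nest j \<nu>1 \<union> shift_nest (j+2) \<nu>2) = shift_nest (j+2) \<nu>2"
proof -
  note A = nestingD(1)[OF N1] and B = nestingD(1)[OF N2]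
  show "inner_nest j (wrap_nest j \<nu>1 \<union> shift_nest (j+2) \<nu>2) = shift_nest 1 \<nu>1"
  proof (intro set_eqI)
    fix z :: "nat \<times> nat" obtain x y where z: "z = (x,y)" by (cases z)
    show "z \<in> inner_nest j (wrap_nest j \<nu>1 \<union> shift_nest (j+2) \<nu>2) \<longleftrightarrow> z \<in> shift_nest 1 \<nu>1"
      unfolding z inner_nest_def wrap_nest_def using A[of "x-1" "y-1"] B[of "x-(j+2)" "y-(j+2)"]
      by (auto simp: mem_shift_nest)
  qed
  show "outer_nest j (wrap_nest j \<nu>1 \<union> shift_nest (j+2) \<nu>2) = shift_nest (j+2) \<nu>2"
  proof (intro set_eqI)
    fix z :: "nat \<times> nat" obtain x y where z: "z = (x,y)" by (cases z)
    show "z \<in> outer_nest j (wrap_nest j \<nu>1 \<union> shift_nest (j+2) \<nu>2) \<longleftrightarrow> z \<in> shift_nest (j+2) \<nu>2"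
      unfolding z outer_nest_def wrap_nest_def using A[of "x-1" "y-1"] B[of "x-(j+2)" "y-(j+2)"]
      by (auto simp: mem_shift_nest)
  qed
qed

lemma bij_betw_shift_nest:
  "bij_betw (shift_nest 1) {\<nu>. nesting n \<nu>} {\<nu>. nesting (Suc n) \<nu> \<and> \<not> is_call \<nu> 1}"
proof (rule bij_betw_byWitness[where f' = "unshift_nest 1"])
  show "\<forall>\<nu>\<in>{\<nu>. nesting n \<nu>}. unshift_nest 1 (shift_nest 1 \<nu>) = \<nu>"
    by (simp add: unshift_shift_nest)
  show "shift_nest 1 ` {\<nu>. nesting n \<nu>} \<subseteq> {\<nu>. nesting (Suc n) \<nu> \<and> \<not> is_call \<nu> 1}"
    using nestingD(1) by (fastforce simp: is_call_def mem_shift_nest intro: nesting_shift_nest)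
  show "\<forall>\<nu>\<in>{\<nu>. nesting (Suc n) \<nu> \<and> \<not> is_call \<nu> 1}. shift_nest 1 (unshift_nest 1 \<nu>) = \<nu>"
    using nestingD(1) by (fastforce intro!: shift_unshift_nest)
  have "nesting n (unshift_nest 1 \<nu>)" if "nesting (Suc n) \<nu>" "\<not> is_call \<nu> 1" for \<nu>
  proof (rule nesting_unshift_nest[OF that(1)], clarify)
    fix a b assume ab: "(a, b) \<in> \<nu>"
    with that(2) have "a \<noteq> 1" unfolding is_call_def by blast
    with nestingD(1)[OF that(1) ab] show "1 < a \<and> b \<le> 1 + n" by auto
  qed
  then show "unshift_nest 1 ` {\<nu>. nesting (Suc n) \<nu> \<and> \<not> is_call \<nu> 1} \<subseteq> {\<nu>. nesting n \<nu>}"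
    by auto
qed

lemma bij_betw_wrap_append:
  assumes "j < n"
  shows "bij_betw (\<lambda>(\<nu>1, \<nu>2). wrap_nest j \<nu>1 \<union> shift_nest (j + 2) \<nu>2)
           ({\<nu>. nesting j \<nu>} \<times> {\<nu>. nesting (n - Suc j) \<nu>}) {\<nu>. nesting (Suc n) \<nu> \<and> (1, j + 2) \<in> \<nu>}"
proof (rule bij_betw_byWitness[where f' = "\<lambda>\<nu>. (unshift_nest 1 (inner_nest j \<nu>), unshift_nest (j + 2) (outer_nest j \<nu>))"])
  show "\<forall>p\<in>{\<nu>. nesting j \<nu>} \<times> {\<nu>. nesting (n - Suc j) \<nu>}.
      (\<lambda>\<nu>. (unshift_nest 1 (inner_nest j \<nu>), unshift_nest (j + 2) (outer_nest j \<nu>)))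
        ((\<lambda>(\<nu>1, \<nu>2). wrap_nest j \<nu>1 \<union> shift_nest (j + 2) \<nu>2) p) = p"
    by (auto simp: inner_outer_nest_split[simplified] unshift_shift_nest)
  have "nesting (Suc n) (wrap_nest j \<nu>1 \<union> shift_nest (j + 2) \<nu>2)"
    if "nesting j \<nu>1" "nesting (n - Suc j) \<nu>2" for \<nu>1 \<nu>2
    using nesting_append[OF nesting_wrap_nest[OF that(1)] that(2)] assms by simp
  then show "(\<lambda>(\<nu>1, \<nu>2). wrap_nest j \<nu>1 \<union> shift_nest (j + 2) \<nu>2) ` ({\<nu>. nesting j \<nu>} \<times> {\<nu>. nesting (n - Suc j) \<nu>})
      \<subseteq> {\<nu>. nesting (Suc n) \<nu> \<and> (1, j + 2) \<in> \<nu>}"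
    by (auto simp: wrap_nest_def)
  show "\<forall>\<nu>\<in>{\<nu>. nesting (Suc n) \<nu> \<and> (1, j + 2) \<in> \<nu>}.
      (\<lambda>(\<nu>1, \<nu>2). wrap_nest j \<nu>1 \<union> shift_nest (j + 2) \<nu>2)
        ((\<lambda>\<nu>. (unshift_nest 1 (inner_nest j \<nu>), unshift_nest (j + 2) (outer_nest j \<nu>))) \<nu>) = \<nu>"
    using nesting_first_call_split(1)[OF _ _ assms] by auto
  show "(\<lambda>\<nu>. (unshift_nest 1 (inner_nest j \<nu>), unshift_nest (j + 2) (outer_nest j \<nu>)))
      ` {\<nu>. nesting (Suc n) \<nu> \<and> (1, j + 2) \<in> \<nu>} \<subseteq> {\<nu>. nesting j \<nu>} \<times> {\<nu>. nesting (n - Suc j) \<nu>}"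
    using nesting_first_call_split(2,3)[OF _ _ assms] by auto
qed

lemma nestings_Suc_eq:
  "{\<nu>. nesting (Suc n) \<nu>} =
     {\<nu>. nesting (Suc n) \<nu> \<and> \<not> is_call \<nu> 1} \<union> (\<Union>j<n. {\<nu>. nesting (Suc n) \<nu> \<and> (1, j + 2) \<in> \<nu>})"
proof (intro set_eqI iffI)
  fix \<nu> assume "\<nu> \<in> {\<nu>. nesting (Suc n) \<nu>}"
  then have N: "nesting (Suc n) \<nu>" by simp
  show "\<nu> \<in> {\<nu>. nesting (Suc n) \<nu> \<and> \<not> is_call \<nu> 1} \<union> (\<Union>j<n. {\<nu>. nesting (Suc n) \<nu> \<and> (1, j + 2) \<in> \<nu>})"
  proof (cases "is_call \<nu> 1")
    case True
    then obtain k where k: "(1, k) \<in> \<nu>" unfolding is_call_def by blast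
    moreover have "k = (k - 2) + 2" "k - 2 < n" using nestingD(1)[OF N k] by auto
    ultimately show ?thesis using N by (metis (mono_tags, lifting) UN_iff UnI2 lessThan_iff mem_Collect_eq)
  qed (use N in auto)
qed auto

lemma sum_nestings_Suc:
  fixes g :: "(nat \<times> nat) set \<Rightarrow> 'k::comm_monoid_add"
  shows "(\<Sum>\<nu>\<in>{\<nu>. nesting (Suc n) \<nu>}. g \<nu>)
    = (\<Sum>\<nu>\<in>{\<nu>. nesting n \<nu>}. g (shift_nest 1 \<nu>))
    + (\<Sum>j<n. \<Sum>\<nu>1\<in>{\<nu>. nesting j \<nu>}. \<Sum>\<nu>2\<in>{\<nu>. nesting (n - Suc j) \<nu>}. g (wrap_nest j \<nu>1 \<union> shift_nest (j + 2) \<nu>2))"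
proof -
  let ?A = "{\<nu>. nesting (Suc n) \<nu> \<and> \<not> is_call \<nu> 1}"
  let ?B = "\<lambda>j. {\<nu>. nesting (Suc n) \<nu> \<and> (1, j + 2) \<in> \<nu>}"
  have fin: "finite ?A" "finite (?B j)" for j
    by (auto intro: finite_subset[OF _ finite_nestings[of "Suc n"]])
  have "?A \<inter> (\<Union>j<n. ?B j) = {}" unfolding is_call_def by blast
  moreover have "?B i \<inter> ?B j = {}" if "i \<noteq> j" for i j
    using that nestingD(2)[of "Suc n" _ 1 "i + 2" "j + 2"] by auto
  ultimately have "(\<Sum>\<nu>\<in>{\<nu>. nesting (Suc n) \<nu>}. g \<nu>) = sum g ?A + (\<Sum>j<n. sum g (?B j))"
    unfolding nestings_Suc_eq[of n] using fin by (simp add: sum.union_disjoint sum.UNION_disjoint)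
  also have "sum g ?A = (\<Sum>\<nu>\<in>{\<nu>. nesting n \<nu>}. g (shift_nest 1 \<nu>))"
    using sum.reindex_bij_betw[OF bij_betw_shift_nest, of g n] by simp
  also have "(\<Sum>j<n. sum g (?B j)) = (\<Sum>j<n. \<Sum>\<nu>1\<in>{\<nu>. nesting j \<nu>}. \<Sum>\<nu>2\<in>{\<nu>. nesting (n - Suc j) \<nu>}.
      g (wrap_nest j \<nu>1 \<union> shift_nest (j + 2) \<nu>2))"
  proof (rule sum.cong[OF refl])
    fix j assume "j \<in> {..<n}"
    then show "sum g (?B j) = (\<Sum>\<nu>1\<in>{\<nu>. nesting j \<nu>}. \<Sum>\<nu>2\<in>{\<nu>. nesting (n - Suc j) \<nu>}.
      g (wrap_nest j \<nu>1 \<union> shift_nest (j + 2) \<nu>2))"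
      unfolding sum.cartesian_product
      using sum.reindex_bij_betw[OF bij_betw_wrap_append, of j n g] by (simp add: split_def)
  qed
  finally show ?thesis .
qed

definition nested_weight where
  "nested_weight Q dc di dr p w q = (\<Sum>\<nu>\<in>{\<nu>. nesting (length w) \<nu>}. runs_weight Q dc di dr \<nu> w p q)"

lemma nested_weight_Nil:
  assumes "p \<in> Q"
  shows "nested_weight Q dc di dr p [] q = (if p = q then 1 else 0)"
proof -
  have "{\<nu>. nesting (length []) \<nu>} = {{}}" by (auto simp: nesting_0_iff)
  then show ?thesis unfolding nested_weight_def by (simp add: runs_weight_Nil[OF assms])
qed

lemma sum_swap_in3:
  "(\<Sum>y\<in>B. \<Sum>r\<in>C. \<Sum>s\<in>D. \<Sum>t\<in>E. f y r s t) = (\<Sum>r\<in>C. \<Sum>s\<in>D. \<Sum>t\<in>E. \<Sum>y\<in>B. f y r s t)"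
  by (subst sum.swap, rule sum.cong[OF refl], subst sum.swap, rule sum.cong[OF refl], rule sum.swap)

lemma sum_nestings_first_internal:
  fixes di :: "nat \<Rightarrow> 'a \<Rightarrow> nat \<Rightarrow> 'k::comm_semiring_1"
  assumes Q: "finite Q" and p: "p \<in> Q"
  shows "(\<Sum>\<nu>\<in>{\<nu>. nesting (length w) \<nu>}. runs_weight Q dc di dr (shift_nest 1 \<nu>) (a # w) p q)
       = (\<Sum>r\<in>Q. di p a r * nested_weight Q dc di dr r w q)"
proof -
  have "runs_weight Q dc di dr (shift_nest 1 \<nu>) (a # w) p q = (\<Sum>r\<in>Q. di p a r * runs_weight Q dc di dr \<nu> w r q)"
    if "nesting (length w) \<nu>" for \<nu>
  proof -
    have "runs_weight Q dc di dr (shift_nest 1 \<nu>) (a # w) p q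
        = runs_weight Q dc di dr ({} \<union> shift_nest (length [a]) \<nu>) ([a] @ w) p q"
      by simp
    also have "\<dots> = (\<Sum>r\<in>Q. runs_weight Q dc di dr {} [a] p r * runs_weight Q dc di dr \<nu> w r q)"
      by (rule runs_weight_append[OF Q nesting_empty that]) auto
    finally show ?thesis by (simp add: runs_weight_single p)
  qed
  then have "(\<Sum>\<nu>\<in>{\<nu>. nesting (length w) \<nu>}. runs_weight Q dc di dr (shift_nest 1 \<nu>) (a # w) p q)
      = (\<Sum>\<nu>\<in>{\<nu>. nesting (length w) \<nu>}. \<Sum>r\<in>Q. di p a r * runs_weight Q dc di dr \<nu> w r q)"
    by simp
  also have "\<dots> = (\<Sum>r\<in>Q. di p a r * nested_weight Q dc di dr r w q)"
    unfolding nested_weight_def sum_distrib_left by (rule sum.swap)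
  finally show ?thesis .
qed

lemma sum_nestings_first_call:
  fixes dc di :: "nat \<Rightarrow> 'a \<Rightarrow> nat \<Rightarrow> 'k::comm_semiring_1"
  assumes Q: "finite Q" and p: "p \<in> Q" and j: "j < length w"
  shows "(\<Sum>\<nu>1\<in>{\<nu>. nesting j \<nu>}. \<Sum>\<nu>2\<in>{\<nu>. nesting (length w - Suc j) \<nu>}.
            runs_weight Q dc di dr (wrap_nest j \<nu>1 \<union> shift_nest (j + 2) \<nu>2) (a # w) p q)
       = (\<Sum>r\<in>Q. \<Sum>s\<in>Q. \<Sum>t\<in>Q. dc p a r * nested_weight Q dc di dr r (take j w) s * dr s p (w ! j) t
            * nested_weight Q dc di dr t (drop (Suc j) w) q)"
proof -
  let ?RS = "runs_weight Q dc di dr" and ?N1 = "{\<nu>. nesting j \<nu>}" and ?N2 = "{\<nu>. nesting (length w - Suc j) \<nu>}"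
  let ?f = "\<lambda>\<nu>1 \<nu>2 r s t. dc p a r * ?RS \<nu>1 (take j w) r s * dr s p (w ! j) t * ?RS \<nu>2 (drop (Suc j) w) t q"
  have split: "a # w = (a # take j w @ [w ! j]) @ drop (Suc j) w"
    using j by (simp add: take_Suc_conv_app_nth[symmetric])
  have "?RS (wrap_nest j \<nu>1 \<union> shift_nest (j + 2) \<nu>2) (a # w) p q = (\<Sum>r\<in>Q. \<Sum>s\<in>Q. \<Sum>t\<in>Q. ?f \<nu>1 \<nu>2 r s t)"
    if N1: "nesting j \<nu>1" and N2: "nesting (length w - Suc j) \<nu>2" for \<nu>1 \<nu>2
  proof -
    have "?RS (wrap_nest j \<nu>1 \<union> shift_nest (j + 2) \<nu>2) (a # w) p q
        = (\<Sum>t\<in>Q. ?RS (wrap_nest j \<nu>1) (a # take j w @ [w ! j]) p t * ?RS \<nu>2 (drop (Suc j) w) t q)"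
      unfolding split using j by (intro runs_weight_append[OF Q nesting_wrap_nest[OF N1] N2]) auto
    also have "\<dots> = (\<Sum>t\<in>Q. \<Sum>r\<in>Q. \<Sum>s\<in>Q. ?f \<nu>1 \<nu>2 r s t)"
      using j by (simp add: runs_weight_wrap[OF Q p _ N1] sum_distrib_right)
    also have "\<dots> = (\<Sum>r\<in>Q. \<Sum>s\<in>Q. \<Sum>t\<in>Q. ?f \<nu>1 \<nu>2 r s t)"
      by (subst sum.swap, rule sum.cong[OF refl], rule sum.swap)
    finally show ?thesis .
  qed
  then have "(\<Sum>\<nu>1\<in>?N1. \<Sum>\<nu>2\<in>?N2. ?RS (wrap_nest j \<nu>1 \<union> shift_nest (j + 2) \<nu>2) (a # w) p q)
      = (\<Sum>\<nu>1\<in>?N1. \<Sum>\<nu>2\<in>?N2. \<Sum>r\<in>Q. \<Sum>s\<in>Q. \<Sum>t\<in>Q. ?f \<nu>1 \<nu>2 r s t)"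
    by (intro sum.cong refl) auto
  also have "\<dots> = (\<Sum>\<nu>1\<in>?N1. \<Sum>r\<in>Q. \<Sum>s\<in>Q. \<Sum>t\<in>Q. \<Sum>\<nu>2\<in>?N2. ?f \<nu>1 \<nu>2 r s t)"
    by (intro sum.cong refl sum_swap_in3)
  also have "\<dots> = (\<Sum>r\<in>Q. \<Sum>s\<in>Q. \<Sum>t\<in>Q. \<Sum>\<nu>1\<in>?N1. \<Sum>\<nu>2\<in>?N2. ?f \<nu>1 \<nu>2 r s t)"
    by (rule sum_swap_in3)
  also have "\<dots> = (\<Sum>r\<in>Q. \<Sum>s\<in>Q. \<Sum>t\<in>Q. dc p a r * nested_weight Q dc di dr r (take j w) s * dr s p (w ! j) t
            * nested_weight Q dc di dr t (drop (Suc j) w) q)"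
  proof -
    have "c * (\<Sum>x\<in>A. f x) * d * (\<Sum>y\<in>B. g y) = (\<Sum>x\<in>A. \<Sum>y\<in>B. c * f x * d * g y)"
      for c d :: 'k and A B :: "(nat \<times> nat) set set" and f g
      by (simp add: sum_distrib_left sum_distrib_right mult.assoc) (rule sum.swap)
    then show ?thesis unfolding nested_weight_def using j by (simp add: min_absorb2)
  qed
  finally show ?thesis .
qed

lemma nested_weight_Cons:
  fixes dc di :: "nat \<Rightarrow> 'a \<Rightarrow> nat \<Rightarrow> 'k::comm_semiring_1"
  assumes "finite Q" "p \<in> Q"
  shows "nested_weight Q dc di dr p (a # w) q = (\<Sum>r\<in>Q. di p a r * nested_weight Q dc di dr r w q)
    + (\<Sum>j<length w. \<Sum>r\<in>Q. \<Sum>s\<in>Q. \<Sum>t\<in>Q. dc p a r * nested_weight Q dc di dr r (take j w) s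
         * dr s p (w ! j) t * nested_weight Q dc di dr t (drop (Suc j) w) q)"
proof -
  have "nested_weight Q dc di dr p (a # w) q
      = (\<Sum>\<nu>\<in>{\<nu>. nesting (length w) \<nu>}. runs_weight Q dc di dr (shift_nest 1 \<nu>) (a # w) p q)
      + (\<Sum>j<length w. \<Sum>\<nu>1\<in>{\<nu>. nesting j \<nu>}. \<Sum>\<nu>2\<in>{\<nu>. nesting (length w - Suc j) \<nu>}.
           runs_weight Q dc di dr (wrap_nest j \<nu>1 \<union> shift_nest (j + 2) \<nu>2) (a # w) p q)"
    unfolding nested_weight_def length_Cons by (rule sum_nestings_Suc)
  also have "\<dots> = (\<Sum>r\<in>Q. di p a r * nested_weight Q dc di dr r w q)
      + (\<Sum>j<length w. \<Sum>r\<in>Q. \<Sum>s\<in>Q. \<Sum>t\<in>Q. dc p a r * nested_weight Q dc di dr r (take j w) s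
         * dr s p (w ! j) t * nested_weight Q dc di dr t (drop (Suc j) w) q)"
    unfolding sum_nestings_first_internal[OF assms]
    by (intro arg_cong2[where f = "(+)"] sum.cong refl sum_nestings_first_call[OF assms]) simp
  finally show ?thesis .
qed

lemma wnwa_behaviour_eq_runs_weight:
  fixes \<iota> :: "nat \<Rightarrow> 'k::comm_semiring_1"
  assumes Q: "finite Q"
  shows "wnwa_behaviour Q \<iota> dc di dr \<kappa> (w, \<nu>) = (\<Sum>p\<in>Q. \<Sum>q\<in>Q. \<iota> p * runs_weight Q dc di dr \<nu> w p q * \<kappa> q)"
proof -
  let ?h = "\<lambda>r. \<iota> (r ! 0) * run_weight dc di dr \<nu> w r * \<kappa> (r ! length w)"
  have "wnwa_behaviour Q \<iota> dc di dr \<kappa> (w, \<nu>) = (\<Sum>r\<in>runs Q (length w). ?h r)"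
    unfolding wnwa_behaviour_def run_weight_def by simp
  also have "\<dots> = (\<Sum>pq\<in>Q \<times> Q. \<Sum>r\<in>{r\<in>runs Q (length w). (r!0, r!length w) = pq}. ?h r)"
    by (rule sum.group[symmetric]) (use Q finite_runs[OF Q] in \<open>auto simp: runs_def\<close>)
  also have "\<dots> = (\<Sum>p\<in>Q. \<Sum>q\<in>Q. \<iota> p * runs_weight Q dc di dr \<nu> w p q * \<kappa> q)"
    unfolding sum.cartesian_product runs_weight_def
    by (intro sum.cong refl) (auto simp: sum_distrib_left sum_distrib_right intro!: sum.cong)
  finally show ?thesis .
qed

lemma proj_wnwa_behaviour:
  fixes \<iota> :: "nat \<Rightarrow> 'k::comm_semiring_1"
  assumes Q: "finite Q" and w: "w \<noteq> []"
  shows "proj (wnwa_behaviour Q \<iota> dc di dr \<kappa>) w = (\<Sum>p\<in>Q. \<Sum>q\<in>Q. \<iota> p * nested_weight Q dc di dr p w q * \<kappa> q)"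
proof -
  have "{\<nu>. (w, \<nu>) \<in> NW} = {\<nu>. nesting (length w) \<nu>}" using w unfolding NW_def by auto
  then have "proj (wnwa_behaviour Q \<iota> dc di dr \<kappa>) w
      = (\<Sum>\<nu>\<in>{\<nu>. nesting (length w) \<nu>}. \<Sum>p\<in>Q. \<Sum>q\<in>Q. \<iota> p * runs_weight Q dc di dr \<nu> w p q * \<kappa> q)"
    unfolding proj_def by (simp add: wnwa_behaviour_eq_runs_weight[OF Q])
  also have "\<dots> = (\<Sum>p\<in>Q. \<Sum>q\<in>Q. \<Sum>\<nu>\<in>{\<nu>. nesting (length w) \<nu>}.
      \<iota> p * runs_weight Q dc di dr \<nu> w p q * \<kappa> q)"
    by (subst sum.swap, rule sum.cong[OF refl], rule sum.swap)
  also have "\<dots> = (\<Sum>p\<in>Q. \<Sum>q\<in>Q. \<iota> p * nested_weight Q dc di dr p w q * \<kappa> q)"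
    unfolding nested_weight_def by (simp add: sum_distrib_left sum_distrib_right)
  finally show ?thesis .
qed

lemma proj_Nil: "proj S [] = 0"
  unfolding proj_def NW_def by simp

lemma cauchy_Nil: "cauchy A B [] = A [] * B []"
  unfolding cauchy_def by simp

lemma cauchy_Cons: "cauchy A B (a#w) = A [] * B (a#w) + cauchy (\<lambda>x. A (a#x)) B w"
  unfolding cauchy_def length_Cons sum.atMost_Suc_shift by simp

lemma cauchy_add_left: "cauchy (\<lambda>x. A x + A' x) B w = cauchy A B w + cauchy A' B w"
  unfolding cauchy_def by (simp add: distrib_right sum.distrib)

lemma cauchy_add_right: "cauchy A (\<lambda>x. B x + B' x) w = cauchy A B w + cauchy A B' w"
  unfolding cauchy_def by (simp add: distrib_left sum.distrib)

lemma cauchy_smult_left: "cauchy (\<lambda>x. c * A x) B w = c * cauchy A B w"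
  unfolding cauchy_def by (simp add: sum_distrib_left mult.assoc)

lemma cauchy_smult_right: "cauchy A (\<lambda>x. c * B x) w = c * cauchy A B w"
  unfolding cauchy_def by (simp add: sum_distrib_left mult.left_commute)

lemma cauchy_sum_left: "cauchy (\<lambda>x. \<Sum>i\<in>I. f i x) B w = (\<Sum>i\<in>I. cauchy (f i) B w)"
  unfolding cauchy_def by (simp add: sum_distrib_right) (rule sum.swap)

lemma cauchy_sum_right: "cauchy A (\<lambda>x. \<Sum>i\<in>I. f i x) w = (\<Sum>i\<in>I. cauchy A (f i) w)"
  unfolding cauchy_def by (simp add: sum_distrib_left) (rule sum.swap)

lemma cauchy_zero_left: "cauchy (\<lambda>x. 0) B w = 0"
  unfolding cauchy_def by simp

lemma cauchy_zero_right: "cauchy A (\<lambda>x. 0) w = 0"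
  unfolding cauchy_def by simp

lemma cauchy_assoc: "cauchy (cauchy A B) C w = cauchy A (cauchy B C) w"
proof (induction w arbitrary: A B)
  case Nil
  then show ?case by (simp add: cauchy_Nil mult.assoc)
next
  case (Cons a w)
  have d: "(\<lambda>x. cauchy A B (a#x)) = (\<lambda>x. A [] * B (a#x) + cauchy (\<lambda>x. A (a#x)) B x)"
    by (simp add: cauchy_Cons)
  have "cauchy (cauchy A B) C (a#w) = cauchy A B [] * C (a#w) + cauchy (\<lambda>x. cauchy A B (a#x)) C w"
    by (rule cauchy_Cons)
  also have "cauchy (\<lambda>x. cauchy A B (a#x)) C w
      = A [] * cauchy (\<lambda>x. B (a#x)) C w + cauchy (cauchy (\<lambda>x. A (a#x)) B) C w"
    unfolding d cauchy_add_left cauchy_smult_left ..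
  also have "cauchy (cauchy (\<lambda>x. A (a#x)) B) C w = cauchy (\<lambda>x. A (a#x)) (cauchy B C) w"
    by (rule Cons.IH)
  finally show ?case
    by (simp add: cauchy_Cons cauchy_Nil distrib_left add.assoc mult.assoc)
qed

lemma cauchy_unit_left: "cauchy (char_series []) A w = A w"
proof (cases w)
  case Nil then show ?thesis by (simp add: cauchy_Nil char_series_def)
next
  case (Cons a v)
  have "cauchy (\<lambda>x. char_series [] (a # x)) A v = 0"
    unfolding char_series_def by (simp add: cauchy_zero_left)
  then show ?thesis unfolding Cons cauchy_Cons by (simp add: char_series_def)
qed

lemma cauchy_unit_right: "cauchy A (char_series []) w = A w"
proof -
  have "cauchy A (char_series []) w = (\<Sum>i\<le>length w. if i = length w then A w else 0)"
    unfolding cauchy_def char_series_def by (intro sum.cong refl) auto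
  then show ?thesis by simp
qed

lemma cauchy_char_Cons: "cauchy (char_series [b]) A (a#w) = (if a = b then A w else 0)"
proof (cases "a = b")
  case True
  then have e: "(\<lambda>x. char_series [b] (a # x)) = char_series []" by (auto simp: char_series_def)
  show ?thesis unfolding cauchy_Cons e cauchy_unit_left using True by (simp add: char_series_def)
next
  case False
  then have "(\<lambda>x. char_series [b] (a # x)) = (\<lambda>x. 0)" by (auto simp: char_series_def)
  then show ?thesis unfolding cauchy_Cons using False by (simp add: char_series_def cauchy_zero_left)
qed

lemma cauchy_cong_shorter_right:
  assumes "A [] = 0" "\<And>v. length v < length w \<Longrightarrow> B v = B' v"
  shows "cauchy A B w = cauchy A B' w"
  unfolding cauchy_def
proof (rule sum.cong[OF refl])
  fix i assume "i \<in> {..length w}"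
  then show "A (take i w) * B (drop i w) = A (take i w) * B' (drop i w)"
  proof (cases i)
    case 0 then show ?thesis using assms(1) by simp
  next
    case (Suc k)
    with \<open>i \<in> {..length w}\<close> have "length (drop i w) < length w" by auto
    then show ?thesis using assms(2) by simp
  qed
qed

lemma cauchy_cong_shorter_left:
  assumes "B [] = 0" "\<And>v. length v < length w \<Longrightarrow> A v = A' v"
  shows "cauchy A B w = cauchy A' B w"
  unfolding cauchy_def
proof (rule sum.cong[OF refl])
  fix i assume i: "i \<in> {..length w}"
  show "A (take i w) * B (drop i w) = A' (take i w) * B (drop i w)"
  proof (cases "i < length w")
    case True then show ?thesis using assms(2)[of "take i w"] by simp
  next
    case False then have "drop i w = []" by simp
    then show ?thesis using assms(1) by simp
  qed
qed

lemma cauchy_append_short: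
  assumes "A [] = 0" "B [] = 0" "length z \<le> 1"
  shows "cauchy A B (w @ z) = (\<Sum>j<length w. A (take (Suc j) w) * B (drop (Suc j) w @ z))"
proof -
  have "cauchy A B (w @ z) = (\<Sum>j<length w + length z. A (take (Suc j) (w @ z)) * B (drop (Suc j) (w @ z)))"
    unfolding cauchy_def sum.atMost_shift using assms(1) by simp
  also have "\<dots> = (\<Sum>j<length w. A (take (Suc j) (w @ z)) * B (drop (Suc j) (w @ z)))"
    using assms(2,3) by (cases z) auto
  also have "\<dots> = (\<Sum>j<length w. A (take (Suc j) w) * B (drop (Suc j) w @ z))"
    by (intro sum.cong refl) auto
  finally show ?thesis .
qed

section \<open>The left-corner form of a proper algebraic system\<close>

locale proper_solution =
  fixes V :: "nat set" and P :: "nat \<Rightarrow> ('a + nat) list \<Rightarrow> 'k::comm_semiring_1"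
    and S :: "nat \<Rightarrow> 'a list \<Rightarrow> 'k"
  assumes system: "alg_system V P" and proper: "proper_system V P"
    and solves: "is_solution V P S" and solution_Nil: "\<forall>X\<in>V. S X [] = 0"
begin

definition rules :: "nat \<Rightarrow> ('a + nat) list set" where
  "rules X = {u. P X u \<noteq> 0}"

definition var_rules :: "nat \<Rightarrow> ('a + nat) list set" where
  "var_rules X = {u\<in>rules X. u \<noteq> [] \<and> (\<exists>Y. hd u = Inr Y)}"

definition letter_rules :: "nat \<Rightarrow> ('a + nat) list set" where
  "letter_rules X = {u\<in>rules X. u \<noteq> [] \<and> (\<exists>a. hd u = Inl a)}"

definition corner_rules :: "nat \<Rightarrow> (nat \<times> ('a + nat) list) set" where
  "corner_rules Y = {(Z, u). Z \<in> V \<and> u \<in> rules Z \<and> u \<noteq> [] \<and> hd u = Inr Y}"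

definition head_var :: "('a + nat) list \<Rightarrow> nat" where
  "head_var u = (case hd u of Inr Y \<Rightarrow> Y | Inl _ \<Rightarrow> 0)"

abbreviation rhs_series :: "('a + nat) list \<Rightarrow> 'a list \<Rightarrow> 'k" where
  "rhs_series u \<equiv> subst_word S u"

definition delta :: "nat \<Rightarrow> nat \<Rightarrow> 'a list \<Rightarrow> 'k" where
  "delta Z X = (\<lambda>v. if Z = X then char_series [] v else 0)"

definition delta_plus :: "(nat \<Rightarrow> nat \<Rightarrow> 'a list \<Rightarrow> 'k) \<Rightarrow> nat \<Rightarrow> nat \<Rightarrow> 'a list \<Rightarrow> 'k" where
  "delta_plus C Z X = (\<lambda>v. delta Z X v + C Z X v)"

text \<open>\<open>corner Y X\<close> collects the words that complete a leftmost \<open>Y\<close> to an \<open>X\<close> along the left spine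
  of a derivation tree; it is the solution of \<open>C = corner_step C\<close>. Properness makes \<open>rhs_series (tl u)\<close>
  quasiregular, so the value of \<open>corner_step C\<close> at \<open>w\<close> depends on \<open>C\<close> at shorter words only, and
  \<open>length w + 1\<close> iterations from \<open>0\<close> already give the fixed point at \<open>w\<close>.\<close>

definition corner_step :: "(nat \<Rightarrow> nat \<Rightarrow> 'a list \<Rightarrow> 'k) \<Rightarrow> nat \<Rightarrow> nat \<Rightarrow> 'a list \<Rightarrow> 'k" where
  "corner_step C Y X w = (\<Sum>(Z, u)\<in>corner_rules Y. P Z u * cauchy (rhs_series (tl u)) (delta_plus C Z X) w)"

fun corner_iter :: "nat \<Rightarrow> nat \<Rightarrow> nat \<Rightarrow> 'a list \<Rightarrow> 'k" where
  "corner_iter 0 = (\<lambda>Y X w. 0)"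
| "corner_iter (Suc n) = corner_step (corner_iter n)"

definition corner :: "nat \<Rightarrow> nat \<Rightarrow> 'a list \<Rightarrow> 'k" where
  "corner Y X w = corner_iter (Suc (length w)) Y X w"

lemma finite_V: "finite V"
  using system unfolding alg_system_def by blast

lemma finite_rules: "X \<in> V \<Longrightarrow> finite (rules X)"
  using system unfolding alg_system_def rules_def by blast

lemma rule_var_in_V: "X \<in> V \<Longrightarrow> u \<in> rules X \<Longrightarrow> Inr Y \<in> set u \<Longrightarrow> Y \<in> V"
  using system unfolding alg_system_def rules_def by blast

lemma rule_nonempty: "X \<in> V \<Longrightarrow> u \<in> rules X \<Longrightarrow> u \<noteq> []"
  using proper unfolding proper_system_def rules_def by auto

lemma finite_corner_rules: "finite (corner_rules Y)"
proof -
  have "corner_rules Y \<subseteq> Sigma V rules" unfolding corner_rules_def by auto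
  moreover have "finite (Sigma V rules)" using finite_V finite_rules by auto
  ultimately show ?thesis by (rule finite_subset)
qed

lemma finite_var_rules: "X \<in> V \<Longrightarrow> finite (var_rules X)" and finite_letter_rules: "X \<in> V \<Longrightarrow> finite (letter_rules X)"
  using finite_rules unfolding var_rules_def letter_rules_def by auto

lemma rhs_series_Nil: "(\<And>Y. Inr Y \<in> set u \<Longrightarrow> Y \<in> V) \<Longrightarrow> u \<noteq> [] \<Longrightarrow> rhs_series u [] = 0"
proof (cases u)
  case (Cons x t)
  assume H: "\<And>Y. Inr Y \<in> set u \<Longrightarrow> Y \<in> V"
  show ?thesis
  proof (cases x)
    case (Inl a) then show ?thesis using Cons by (simp add: cauchy_Nil char_series_def)
  next
    case (Inr Y) then have "Y \<in> V" using H Cons by auto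
    then show ?thesis using Inr Cons solution_Nil by (simp add: cauchy_Nil)
  qed
qed simp

lemma corner_rulesD:
  assumes "(Z,u) \<in> corner_rules Y"
  shows "u = Inr Y # tl u" "tl u \<noteq> []" "Y \<in> V" "Z \<in> V" "\<And>W. Inr W \<in> set (tl u) \<Longrightarrow> W \<in> V" "rhs_series (tl u) [] = 0"
proof -
  from assms have Z: "Z \<in> V" "u \<in> rules Z" "u \<noteq> []" "hd u = Inr Y" unfolding corner_rules_def by auto
  show u: "u = Inr Y # tl u" using Z by (cases u) auto
  have "Inr Y \<in> set u" by (subst u) simp
  then show Y: "Y \<in> V" by (rule rule_var_in_V[OF Z(1,2)])
  show "Z \<in> V" by (rule Z(1))
  show tl: "tl u \<noteq> []"
  proof
    assume "tl u = []"
    then have "u = [Inr Y]" using u by simp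
    moreover have "P Z [Inr Y] = 0" using proper Z(1) Y unfolding proper_system_def by blast
    ultimately show False using Z(2) unfolding rules_def by simp
  qed
  have "set (tl u) \<subseteq> set u" by (cases u) auto
  then show W: "\<And>W. Inr W \<in> set (tl u) \<Longrightarrow> W \<in> V" using rule_var_in_V[OF Z(1,2)] by blast
  show "rhs_series (tl u) [] = 0" by (rule rhs_series_Nil[OF W tl])
qed

lemma corner_step_cong:
  assumes "\<And>Z v. length v < length w \<Longrightarrow> C Z X v = C' Z X v"
  shows "corner_step C Y X w = corner_step C' Y X w"
  unfolding corner_step_def
proof (rule sum.cong[OF refl], clarify)
  fix Z u assume zu: "(Z,u) \<in> corner_rules Y"
  have "cauchy (rhs_series (tl u)) (delta_plus C Z X) w = cauchy (rhs_series (tl u)) (delta_plus C' Z X) w"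
    by (rule cauchy_cong_shorter_right, rule corner_rulesD(6)[OF zu]) (simp add: delta_plus_def assms)
  then show "P Z u * cauchy (rhs_series (tl u)) (delta_plus C Z X) w = P Z u * cauchy (rhs_series (tl u)) (delta_plus C' Z X) w" by simp
qed

lemma corner_iter_stable: "length w < n \<Longrightarrow> length w < m \<Longrightarrow> corner_iter n Y X w = corner_iter m Y X w"
proof (induction n arbitrary: m Y X w)
  case 0 then show ?case by simp
next
  case (Suc n)
  then obtain m' where m: "m = Suc m'" by (cases m) auto
  have "corner_iter n Z X v = corner_iter m' Z X v" if "length v < length w" for Z v
    using Suc.IH[of v m' Z X] Suc.prems m that by simp
  then show ?case unfolding m corner_iter.simps by (rule corner_step_cong)
qed

lemma corner_unfold: "corner Y X w = corner_step corner Y X w"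
proof -
  have "corner Y X w = corner_step (corner_iter (length w)) Y X w" unfolding corner_def by simp
  also have "\<dots> = corner_step corner Y X w"
  proof (rule corner_step_cong)
    fix Z and v :: "'a list" assume "length v < length w"
    then have "corner_iter (length w) Z X v = corner_iter (Suc (length v)) Z X v" by (intro corner_iter_stable) auto
    then show "corner_iter (length w) Z X v = corner Z X v" unfolding corner_def by (simp del: corner_iter.simps)
  qed
  finally show ?thesis .
qed

lemma corner_Nil: "corner Y X [] = 0"
  unfolding corner_unfold[of Y X "[]"] corner_step_def
proof (intro sum.neutral ballI, clarify)
  fix Z u assume "(Z,u) \<in> corner_rules Y"
  then show "P Z u * cauchy (rhs_series (tl u)) (delta_plus corner Z X) [] = 0" by (simp add: cauchy_Nil corner_rulesD(6))
qed

lemma cauchy_delta_left: "cauchy (delta Z Y) B w = (if Z = Y then B w else 0)"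
  unfolding delta_def by (cases "Z = Y") (simp_all add: cauchy_unit_left cauchy_zero_left)

lemma cauchy_delta_right: "cauchy A (delta Z Y) w = (if Z = Y then A w else 0)"
  unfolding delta_def by (cases "Z = Y") (simp_all add: cauchy_unit_right cauchy_zero_right)

lemma var_rule_in_corner_rules:
  assumes "X \<in> V" "u \<in> var_rules X"
  shows "(X, u) \<in> corner_rules (head_var u)"
  using assms unfolding var_rules_def corner_rules_def head_var_def by auto

lemma head_var_iff: "((\<exists>Y. hd u = Inr Y) \<and> V0 = head_var u) \<longleftrightarrow> hd u = Inr V0"
  by (cases "hd u") (auto simp: head_var_def)

lemma corner_eq: "corner V0 Y = (\<lambda>v. \<Sum>(Z,u)\<in>corner_rules V0. P Z u * cauchy (rhs_series (tl u)) (delta_plus corner Z Y) v)"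
  by (rule ext) (subst corner_unfold, simp add: corner_step_def)

lemma sum_corner_rules_delta:
  assumes X: "X \<in> V"
  shows "(\<Sum>(Z,u)\<in>corner_rules V0. P Z u * (if Z = X then g u else 0))
       = (\<Sum>u\<in>var_rules X. P X u * (if V0 = head_var u then g u else 0))"
proof -
  have "(\<Sum>(Z,u)\<in>corner_rules V0. P Z u * (if Z = X then g u else 0))
      = (\<Sum>p\<in>corner_rules V0. if fst p = X then P X (snd p) * g (snd p) else 0)"
    by (intro sum.cong refl) auto
  also have "\<dots> = (\<Sum>p\<in>{p\<in>corner_rules V0. fst p = X}. P X (snd p) * g (snd p))"
    by (rule sum.inter_filter[symmetric, OF finite_corner_rules])
  also have "{p\<in>corner_rules V0. fst p = X} = (\<lambda>u. (X,u)) ` {u\<in>var_rules X. V0 = head_var u}"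
  proof (intro set_eqI iffI)
    fix p assume "p \<in> {p\<in>corner_rules V0. fst p = X}"
    then show "p \<in> (\<lambda>u. (X,u)) ` {u\<in>var_rules X. V0 = head_var u}"
      unfolding corner_rules_def var_rules_def using head_var_iff by (auto simp: image_iff head_var_def)
  next
    fix p assume "p \<in> (\<lambda>u. (X,u)) ` {u\<in>var_rules X. V0 = head_var u}"
    then show "p \<in> {p\<in>corner_rules V0. fst p = X}"
      unfolding corner_rules_def var_rules_def using head_var_iff X by auto
  qed
  also have "(\<Sum>p\<in>(\<lambda>u. (X,u)) ` {u\<in>var_rules X. V0 = head_var u}. P X (snd p) * g (snd p))
      = (\<Sum>u\<in>{u\<in>var_rules X. V0 = head_var u}. P X u * g u)"
    by (subst sum.reindex) (auto simp: inj_on_def)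
  also have "\<dots> = (\<Sum>u\<in>var_rules X. if V0 = head_var u then P X u * g u else 0)"
    by (rule sum.inter_filter[OF finite_var_rules[OF X]])
  also have "\<dots> = (\<Sum>u\<in>var_rules X. P X u * (if V0 = head_var u then g u else 0))"
    by (intro sum.cong refl) auto
  finally show ?thesis .
qed

lemma cauchy_delta_plus_corner_left:
  "cauchy (delta_plus corner V0 Y) B w
     = (if V0 = Y then B w else 0)
     + (\<Sum>(Z, u)\<in>corner_rules V0. P Z u * cauchy (rhs_series (tl u)) (cauchy (delta_plus corner Z Y) B) w)"
proof -
  have "cauchy (delta_plus corner V0 Y) B w = cauchy (delta V0 Y) B w + cauchy (corner V0 Y) B w"
    unfolding delta_plus_def by (rule cauchy_add_left)
  also have "cauchy (corner V0 Y) B w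
      = cauchy (\<lambda>v. \<Sum>(Z, u)\<in>corner_rules V0. P Z u * cauchy (rhs_series (tl u)) (delta_plus corner Z Y) v) B w"
    by (subst corner_eq) simp
  also have "\<dots> = (\<Sum>(Z, u)\<in>corner_rules V0. P Z u * cauchy (rhs_series (tl u)) (cauchy (delta_plus corner Z Y) B) w)"
    unfolding cauchy_sum_left by (intro sum.cong refl) (auto simp: cauchy_smult_left cauchy_assoc)
  finally show ?thesis by (simp add: cauchy_delta_left)
qed

text \<open>The mirror image of the defining equation of \<open>corner\<close>: the left spine from \<open>V0\<close> up to \<open>X\<close>
  is now split at its top rule \<open>X \<rightarrow> Y t\<close> instead of its bottom rule. Both sides satisfy the same
  recursion in the length of the word.\<close>

lemma corner_right_unfold:
  assumes "X \<in> V"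
  shows "corner V0 X w = (\<Sum>u\<in>var_rules X. P X u * cauchy (delta_plus corner V0 (head_var u)) (rhs_series (tl u)) w)"
  using assms
proof (induction "length w" arbitrary: w V0 X rule: less_induct)
  case less
  note X = less.prems
  define right_unfolding where "right_unfolding = (\<lambda>Z X v. \<Sum>u'\<in>var_rules X. P X u' * cauchy (delta_plus corner Z (head_var u')) (rhs_series (tl u')) v)"
  define nested where "nested = (\<lambda>Z u u'. cauchy (rhs_series (tl u)) (cauchy (delta_plus corner Z (head_var u')) (rhs_series (tl u'))) w)"
  have IH: "corner Z X v = right_unfolding Z X v" if "length v < length w" for Z v
    unfolding right_unfolding_def by (rule less.hyps[OF that X])
  have cauchy_rule_step: "cauchy (rhs_series (tl u)) (delta_plus corner Z X) w
      = (if Z = X then rhs_series (tl u) w else 0) + (\<Sum>u'\<in>var_rules X. P X u' * nested Z u u')"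
    if zu: "(Z,u) \<in> corner_rules V0" for Z u
  proof -
    have "cauchy (rhs_series (tl u)) (delta_plus corner Z X) w = cauchy (rhs_series (tl u)) (delta Z X) w + cauchy (rhs_series (tl u)) (corner Z X) w"
      unfolding delta_plus_def by (rule cauchy_add_right)
    also have "cauchy (rhs_series (tl u)) (corner Z X) w = cauchy (rhs_series (tl u)) (right_unfolding Z X) w"
      by (rule cauchy_cong_shorter_right, rule corner_rulesD(6)[OF zu], rule IH)
    also have "\<dots> = (\<Sum>u'\<in>var_rules X. P X u' * nested Z u u')"
      unfolding right_unfolding_def nested_def cauchy_sum_right cauchy_smult_right ..
    finally show ?thesis by (simp add: cauchy_delta_right)
  qed
  have cauchy_corner_step: "cauchy (delta_plus corner V0 (head_var u')) (rhs_series (tl u')) w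
      = (if V0 = head_var u' then rhs_series (tl u') w else 0) + (\<Sum>(Z,u)\<in>corner_rules V0. P Z u * nested Z u u')" for u'
    unfolding nested_def by (rule cauchy_delta_plus_corner_left)
  have "corner V0 X w = (\<Sum>(Z,u)\<in>corner_rules V0. P Z u * cauchy (rhs_series (tl u)) (delta_plus corner Z X) w)"
    by (subst corner_unfold) (simp add: corner_step_def)
  also have "\<dots> = (\<Sum>(Z,u)\<in>corner_rules V0. P Z u * (if Z = X then rhs_series (tl u) w else 0))
      + (\<Sum>(Z,u)\<in>corner_rules V0. \<Sum>u'\<in>var_rules X. P Z u * P X u' * nested Z u u')"
    by (simp add: cauchy_rule_step distrib_left sum.distrib sum_distrib_left mult.assoc case_prod_beta cong: sum.cong)
  also have "(\<Sum>(Z,u)\<in>corner_rules V0. P Z u * (if Z = X then rhs_series (tl u) w else 0))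
      = (\<Sum>u\<in>var_rules X. P X u * (if V0 = head_var u then rhs_series (tl u) w else 0))"
    by (rule sum_corner_rules_delta[OF X])
  also have "(\<Sum>(Z,u)\<in>corner_rules V0. \<Sum>u'\<in>var_rules X. P Z u * P X u' * nested Z u u')
      = (\<Sum>u'\<in>var_rules X. \<Sum>(Z,u)\<in>corner_rules V0. P Z u * P X u' * nested Z u u')"
    unfolding split_def by (rule sum.swap)
  also have "(\<Sum>u\<in>var_rules X. P X u * (if V0 = head_var u then rhs_series (tl u) w else 0))
      + (\<Sum>u'\<in>var_rules X. \<Sum>(Z,u)\<in>corner_rules V0. P Z u * P X u' * nested Z u u')
      = (\<Sum>u'\<in>var_rules X. P X u' * cauchy (delta_plus corner V0 (head_var u')) (rhs_series (tl u')) w)"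
    unfolding cauchy_corner_step distrib_left sum.distrib sum_distrib_left
    by (simp add: case_prod_beta mult.assoc mult.left_commute)
  finally show ?case .
qed

definition letter_part :: "nat \<Rightarrow> 'a list \<Rightarrow> 'k" where
  "letter_part Y w = (\<Sum>u\<in>letter_rules Y. P Y u * rhs_series u w)"

definition left_corner_part :: "nat \<Rightarrow> 'a list \<Rightarrow> 'k" where
  "left_corner_part X w = (\<Sum>Y\<in>V. cauchy (letter_part Y) (delta_plus corner Y X) w)"

lemma var_rulesD:
  assumes "X \<in> V" "u \<in> var_rules X"
  shows "u = Inr (head_var u) # tl u" "head_var u \<in> V" "rhs_series (tl u) [] = 0"
  using corner_rulesD[OF var_rule_in_corner_rules[OF assms]] by auto

lemma solution_split:
  assumes X: "X \<in> V"
  shows "S X w = letter_part X w + (\<Sum>u\<in>var_rules X. P X u * cauchy (S (head_var u)) (rhs_series (tl u)) w)"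
proof -
  have "S X w = (\<Sum>u\<in>rules X. P X u * rhs_series u w)"
    using solves X unfolding is_solution_def rules_def by (metis (no_types, lifting))
  also have "rules X = letter_rules X \<union> var_rules X"
  proof (intro set_eqI iffI)
    fix u assume u: "u \<in> rules X"
    then have "u \<noteq> []" using rule_nonempty[OF X] by blast
    then show "u \<in> letter_rules X \<union> var_rules X" using u unfolding letter_rules_def var_rules_def by (cases "hd u") auto
  qed (auto simp: letter_rules_def var_rules_def)
  also have "(\<Sum>u\<in>letter_rules X \<union> var_rules X. P X u * rhs_series u w) = letter_part X w + (\<Sum>u\<in>var_rules X. P X u * rhs_series u w)"
    unfolding letter_part_def by (rule sum.union_disjoint) (use finite_letter_rules[OF X] finite_var_rules[OF X] in \<open>auto simp: letter_rules_def var_rules_def\<close>)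
  also have "(\<Sum>u\<in>var_rules X. P X u * rhs_series u w) = (\<Sum>u\<in>var_rules X. P X u * cauchy (S (head_var u)) (rhs_series (tl u)) w)"
  proof (rule sum.cong[OF refl])
    fix u assume "u \<in> var_rules X"
    note F = var_rulesD[OF X this]
    have "rhs_series u w = rhs_series (Inr (head_var u) # tl u) w" using F(1) by metis
    then show "P X u * rhs_series u w = P X u * cauchy (S (head_var u)) (rhs_series (tl u)) w" by simp
  qed
  finally show ?thesis .
qed

lemma letter_part_Nil: "Y \<in> V \<Longrightarrow> letter_part Y [] = 0"
  unfolding letter_part_def
proof (intro sum.neutral ballI)
  fix u assume Y: "Y \<in> V" and u: "u \<in> letter_rules Y"
  then have "rhs_series u [] = 0" using rule_var_in_V[OF Y] rhs_series_Nil unfolding letter_rules_def by auto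
  then show "P Y u * rhs_series u [] = 0" by simp
qed

lemma left_corner_part_split:
  assumes X: "X \<in> V"
  shows "left_corner_part X w
       = letter_part X w + (\<Sum>u\<in>var_rules X. P X u * cauchy (left_corner_part (head_var u)) (rhs_series (tl u)) w)"
proof -
  have "left_corner_part X w
      = (\<Sum>Y\<in>V. cauchy (letter_part Y) (delta Y X) w) + (\<Sum>Y\<in>V. cauchy (letter_part Y) (corner Y X) w)"
    unfolding left_corner_part_def delta_plus_def cauchy_add_right sum.distrib ..
  also have "(\<Sum>Y\<in>V. cauchy (letter_part Y) (delta Y X) w) = letter_part X w"
    unfolding cauchy_delta_right using X finite_V by (simp add: sum.delta')
  also have "(\<Sum>Y\<in>V. cauchy (letter_part Y) (corner Y X) w) = (\<Sum>Y\<in>V. \<Sum>u\<in>var_rules X.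
      P X u * cauchy (cauchy (letter_part Y) (delta_plus corner Y (head_var u))) (rhs_series (tl u)) w)"
  proof (rule sum.cong[OF refl])
    fix Y
    have "corner Y X = (\<lambda>v. \<Sum>u\<in>var_rules X. P X u * cauchy (delta_plus corner Y (head_var u)) (rhs_series (tl u)) v)"
      by (rule ext) (rule corner_right_unfold[OF X])
    then show "cauchy (letter_part Y) (corner Y X) w = (\<Sum>u\<in>var_rules X.
        P X u * cauchy (cauchy (letter_part Y) (delta_plus corner Y (head_var u))) (rhs_series (tl u)) w)"
      by (simp add: cauchy_sum_right cauchy_smult_right cauchy_assoc)
  qed
  also have "\<dots> = (\<Sum>u\<in>var_rules X. P X u * cauchy (left_corner_part (head_var u)) (rhs_series (tl u)) w)"
    unfolding left_corner_part_def cauchy_sum_left by (subst sum.swap) (simp add: sum_distrib_left)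
  finally show ?thesis .
qed

text \<open>Both sides satisfy the recursion of \<open>solution_split\<close>, whose right-hand side at
  \<open>w\<close> depends on values at shorter words only.\<close>

lemma solution_eq_left_corner_part:
  assumes "X \<in> V"
  shows "S X w = left_corner_part X w"
  using assms
proof (induction "length w" arbitrary: w X rule: less_induct)
  case less
  have "cauchy (S (head_var u)) (rhs_series (tl u)) w = cauchy (left_corner_part (head_var u)) (rhs_series (tl u)) w"
    if "u \<in> var_rules X" for u
    using var_rulesD[OF less.prems that] by (intro cauchy_cong_shorter_left less.hyps) auto
  then show ?case
    unfolding solution_split[OF less.prems] left_corner_part_split[OF less.prems] by simp
qed

end

section \<open>Items and stacks\<close>

datatype 'b item = Letter 'b | Var nat | Corner nat nat

fun item_of :: "'b + nat \<Rightarrow> 'b item" where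
  "item_of (Inl a) = Letter a" | "item_of (Inr X) = Var X"

locale proper_solution_finite = proper_solution V P S
  for V and P :: "nat \<Rightarrow> ('a::finite + nat) list \<Rightarrow> 'k::comm_semiring_1" and S
begin

fun item_series :: "'a item \<Rightarrow> 'a list \<Rightarrow> 'k" where
  "item_series (Letter b) = char_series [b]"
| "item_series (Var X) = S X"
| "item_series (Corner Y X) = corner Y X"

definition stack_series :: "'a item list \<Rightarrow> 'a list \<Rightarrow> 'k" where
  "stack_series g = foldr (\<lambda>h acc. cauchy (item_series h) acc) g (char_series [])"

lemma stack_series_empty: "stack_series [] = char_series []"
  unfolding stack_series_def by simp

lemma stack_series_push: "stack_series (h # g) = cauchy (item_series h) (stack_series g)"
  unfolding stack_series_def by simp

lemma stack_series_append: "stack_series (g1 @ g2) = cauchy (stack_series g1) (stack_series g2)"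
proof (induction g1)
  case Nil then show ?case by (simp add: stack_series_empty cauchy_unit_left fun_eq_iff)
next
  case (Cons h g1)
  show ?case unfolding append_Cons stack_series_push Cons.IH by (rule ext) (simp add: cauchy_assoc)
qed

lemma stack_series_item_of: "stack_series (map item_of u) = rhs_series u"
proof (induction u)
  case Nil then show ?case by (simp add: stack_series_empty)
next
  case (Cons c u)
  then show ?case by (cases c) (simp_all add: stack_series_push)
qed

definition items :: "'a item set" where
  "items = range Letter \<union> Var ` V \<union> (\<lambda>(Y, X). Corner Y X) ` (V \<times> V)"

lemma finite_items: "finite items"
proof -
  have "finite (range (Letter :: 'a \<Rightarrow> 'a item))" by (rule finite_imageI) simp
  then show ?thesis unfolding items_def using finite_V by auto
qed

lemma item_series_Nil: "h \<in> items \<Longrightarrow> item_series h [] = 0"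
  unfolding items_def using solution_Nil by (auto simp: char_series_def corner_Nil)

lemma stack_series_at_Nil: "set g \<subseteq> items \<Longrightarrow> stack_series g [] = (if g = [] then 1 else 0)"
  by (cases g) (auto simp: stack_series_empty stack_series_push cauchy_Nil char_series_def item_series_Nil)

definition max_rule_length :: nat where
  "max_rule_length = Max (insert 0 (length ` (\<Union>X\<in>V. rules X)))"

text \<open>A corner step leaves up to \<open>max_rule_length\<close> items produced by the leading symbol of a rule,
  followed by the rest of the rule and one \<open>Corner\<close> item.\<close>

definition stack_bound :: nat where
  "stack_bound = 2 * max_rule_length + 1"

definition stacks :: "'a item list set" where
  "stacks = {g. set g \<subseteq> items \<and> length g \<le> stack_bound}"

lemma finite_stacks: "finite stacks"
  unfolding stacks_def using finite_lists_length_le[OF finite_items, of stack_bound] by simp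

lemma rule_length_le: "X \<in> V \<Longrightarrow> u \<in> rules X \<Longrightarrow> length u \<le> max_rule_length"
  unfolding max_rule_length_def by (rule Max_ge) (use finite_V finite_rules in auto)

lemma set_item_of_rule: "X \<in> V \<Longrightarrow> u \<in> rules X \<Longrightarrow> set (map item_of u) \<subseteq> items"
proof -
  assume X: "X \<in> V" "u \<in> rules X"
  { fix c assume c: "c \<in> set u"
    have "item_of c \<in> items"
    proof (cases c)
      case (Inl a) then show ?thesis by (simp add: items_def)
    next
      case (Inr Y) then have "Y \<in> V" using rule_var_in_V[OF X] c by simp
      then show ?thesis using Inr by (simp add: items_def)
    qed }
  then show ?thesis by auto
qed

text \<open>\<open>item_step h a g\<close> is the weight with which the item \<open>h\<close> produces the letter \<open>a\<close> followed by the
  stack \<open>g\<close>. For a variable \<open>X\<close> it is read off the left-corner form: a rule \<open>Y \<rightarrow> a t\<close>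
  leaves \<open>t\<close> followed by \<open>Corner Y X\<close> and, if \<open>Y = X\<close>, also \<open>t\<close> alone.\<close>

definition climb_step :: "nat \<Rightarrow> nat \<Rightarrow> 'a item list \<Rightarrow> 'a item list \<Rightarrow> 'k" where
  "climb_step Z X t g = (if g = t @ [Corner Z X] then 1 else 0) + (if Z = X \<and> g = t then 1 else 0)"

definition letter_rules_at :: "'a \<Rightarrow> (nat \<times> ('a + nat) list) set" where
  "letter_rules_at a = {(Y, u). Y \<in> V \<and> u \<in> rules Y \<and> u \<noteq> [] \<and> hd u = Inl a}"

definition var_step :: "nat \<Rightarrow> 'a \<Rightarrow> 'a item list \<Rightarrow> 'k" where
  "var_step X a g = (\<Sum>(Y, u)\<in>letter_rules_at a. P Y u * climb_step Y X (map item_of (tl u)) g)"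

fun symbol_step :: "'a + nat \<Rightarrow> 'a \<Rightarrow> 'a item list \<Rightarrow> 'k" where
  "symbol_step (Inl b) a g = (if a = b \<and> g = [] then 1 else 0)"
| "symbol_step (Inr W) a g = var_step W a g"

definition corner_item_step :: "nat \<Rightarrow> nat \<Rightarrow> 'a \<Rightarrow> 'a item list \<Rightarrow> 'k" where
  "corner_item_step Y X a g = (\<Sum>(Z, u)\<in>corner_rules Y. P Z u *
     (\<Sum>g'\<in>stacks. symbol_step (hd (tl u)) a g' * climb_step Z X (g' @ map item_of (tl (tl u))) g))"

fun item_step :: "'a item \<Rightarrow> 'a \<Rightarrow> 'a item list \<Rightarrow> 'k" where
  "item_step (Letter b) = symbol_step (Inl b)"
| "item_step (Var X) = var_step X"
| "item_step (Corner Y X) = corner_item_step Y X"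

lemma sum_letter_rules_at:
  "(\<Sum>Y\<in>V. \<Sum>u\<in>letter_rules Y. if hd u = Inl a then f Y u else 0) = (\<Sum>(Y, u)\<in>letter_rules_at a. f Y u)"
proof -
  have fin: "finite (Sigma V letter_rules)" using finite_V finite_letter_rules by auto
  have "(\<Sum>Y\<in>V. \<Sum>u\<in>letter_rules Y. if hd u = Inl a then f Y u else 0)
      = (\<Sum>p\<in>Sigma V letter_rules. if hd (snd p) = Inl a then f (fst p) (snd p) else 0)"
    by (subst sum.Sigma) (use finite_V finite_letter_rules in \<open>auto simp: split_def\<close>)
  also have "\<dots> = (\<Sum>p\<in>{p\<in>Sigma V letter_rules. hd (snd p) = Inl a}. f (fst p) (snd p))"
    by (rule sum.inter_filter[symmetric, OF fin])
  also have "{p\<in>Sigma V letter_rules. hd (snd p) = Inl a} = letter_rules_at a"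
    unfolding letter_rules_at_def letter_rules_def by auto
  finally show ?thesis by (simp add: split_def)
qed

lemma letter_rules_atD:
  assumes "(Y, u) \<in> letter_rules_at a" "X \<in> V"
  shows "map item_of (tl u) \<in> stacks" "map item_of (tl u) @ [Corner Y X] \<in> stacks"
    "length (map item_of (tl u) @ [Corner Y X]) \<le> max_rule_length"
    "set (map item_of (tl u) @ [Corner Y X]) \<subseteq> items"
proof -
  have Y: "Y \<in> V" "u \<in> rules Y" "u \<noteq> []" "hd u = Inl a"
    using assms(1) unfolding letter_rules_at_def by auto
  have l: "length u \<le> max_rule_length" by (rule rule_length_le[OF Y(1,2)])
  have s: "set (map item_of (tl u)) \<subseteq> items" using set_item_of_rule[OF Y(1,2)] by (cases u) auto
  have c: "Corner Y X \<in> items" using Y(1) assms(2) unfolding items_def by auto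
  show "map item_of (tl u) \<in> stacks" "map item_of (tl u) @ [Corner Y X] \<in> stacks"
    using l s c Y(3) unfolding stacks_def stack_bound_def by (cases u; auto)+
  show "length (map item_of (tl u) @ [Corner Y X]) \<le> max_rule_length" using l Y(3) by (cases u) auto
  show "set (map item_of (tl u) @ [Corner Y X]) \<subseteq> items" using s c by auto
qed

lemma stack_series_Corner: "stack_series [Corner Y X] = corner Y X"
  by (rule ext) (simp add: stack_series_push stack_series_empty cauchy_unit_right)

lemma sum_climb_step:
  assumes "t \<in> stacks" "t @ [Corner Z X] \<in> stacks"
  shows "(\<Sum>g\<in>stacks. climb_step Z X t g * stack_series g x) = cauchy (stack_series t) (delta_plus corner Z X) x"
proof -
  have "(\<Sum>g\<in>stacks. climb_step Z X t g * stack_series g x)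
      = (\<Sum>g\<in>stacks. if g = t @ [Corner Z X] then stack_series g x else 0)
      + (\<Sum>g\<in>stacks. if Z = X \<and> g = t then stack_series g x else 0)"
    unfolding climb_step_def sum.distrib[symmetric] distrib_right by (intro sum.cong refl) simp
  also have "\<dots> = stack_series (t @ [Corner Z X]) x + (if Z = X then stack_series t x else 0)"
    using assms finite_stacks by (simp add: sum.delta)
  finally show ?thesis
    unfolding delta_plus_def cauchy_add_right cauchy_delta_right stack_series_append stack_series_Corner
    by (simp add: add.commute)
qed

lemma letter_part_at_Cons:
  "letter_part Y (a # x) = (\<Sum>u\<in>letter_rules Y. P Y u * (if hd u = Inl a then 1 else 0) * rhs_series (tl u) x)"
  unfolding letter_part_def
proof (rule sum.cong[OF refl])
  fix u assume "u \<in> letter_rules Y"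
  then obtain b t where u: "u = Inl b # t"
    unfolding letter_rules_def by (cases u) auto
  show "P Y u * rhs_series u (a # x) = P Y u * (if hd u = Inl a then 1 else 0) * rhs_series (tl u) x"
    unfolding u by (simp add: cauchy_char_Cons)
qed

lemma solution_at_Cons:
  assumes X: "X \<in> V"
  shows "S X (a # x) = (\<Sum>g\<in>stacks. var_step X a g * stack_series g x)"
proof -
  have "S X (a # x) = (\<Sum>Y\<in>V. cauchy (\<lambda>x'. letter_part Y (a # x')) (delta_plus corner Y X) x)"
    unfolding solution_eq_left_corner_part[OF X] left_corner_part_def
    by (intro sum.cong refl) (simp add: cauchy_Cons letter_part_Nil)
  also have "\<dots> = (\<Sum>Y\<in>V. \<Sum>u\<in>letter_rules Y.
      if hd u = Inl a then P Y u * cauchy (rhs_series (tl u)) (delta_plus corner Y X) x else 0)"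
    unfolding letter_part_at_Cons cauchy_sum_left by (intro sum.cong refl) (simp add: cauchy_smult_left)
  also have "\<dots> = (\<Sum>(Y, u)\<in>letter_rules_at a. P Y u * cauchy (rhs_series (tl u)) (delta_plus corner Y X) x)"
    by (rule sum_letter_rules_at)
  also have "\<dots> = (\<Sum>(Y, u)\<in>letter_rules_at a. \<Sum>g\<in>stacks.
      P Y u * climb_step Y X (map item_of (tl u)) g * stack_series g x)"
  proof (intro sum.cong refl, clarify)
    fix Y u assume "(Y, u) \<in> letter_rules_at a"
    from letter_rules_atD(1,2)[OF this X]
    show "P Y u * cauchy (rhs_series (tl u)) (delta_plus corner Y X) x
        = (\<Sum>g\<in>stacks. P Y u * climb_step Y X (map item_of (tl u)) g * stack_series g x)"
      by (simp add: sum_climb_step[symmetric] stack_series_item_of[symmetric] sum_distrib_left mult.assoc)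
  qed
  also have "\<dots> = (\<Sum>g\<in>stacks. var_step X a g * stack_series g x)"
    unfolding var_step_def sum_distrib_right split_def by (rule sum.swap)
  finally show ?thesis .
qed

lemma symbol_series_at_Cons:
  assumes "item_of c \<in> items"
  shows "item_series (item_of c) (a # x) = (\<Sum>g\<in>stacks. symbol_step c a g * stack_series g x)"
proof (cases c)
  case (Inl b)
  have "(\<Sum>g\<in>stacks. symbol_step c a g * stack_series g x) = (\<Sum>g\<in>stacks. if g = [] then (if a = b then stack_series g x else 0) else 0)"
    by (intro sum.cong) (auto simp: Inl)
  also have "\<dots> = (if a = b then stack_series [] x else 0)"
    using finite_stacks by (simp add: stacks_def)
  finally show ?thesis unfolding Inl by (auto simp: char_series_def stack_series_empty)
next
  case (Inr W)
  with assms have "W \<in> V" unfolding items_def by auto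
  with Inr show ?thesis by (simp add: solution_at_Cons)
qed

lemma symbol_step_nonzeroD:
  assumes "item_of c \<in> items" "symbol_step c a g \<noteq> 0"
  shows "length g \<le> max_rule_length \<and> set g \<subseteq> items"
proof (cases c)
  case (Inr W)
  with assms(1) have W: "W \<in> V" unfolding items_def by auto
  from assms(2) Inr have "var_step W a g \<noteq> 0" by simp
  then obtain p where "p \<in> letter_rules_at a"
    and "(case p of (Y, u) \<Rightarrow> P Y u * climb_step Y W (map item_of (tl u)) g) \<noteq> 0"
    unfolding var_step_def by (rule sum.not_neutral_contains_not_neutral)
  moreover obtain Y u where "p = (Y, u)" by (cases p)
  ultimately have p: "(Y, u) \<in> letter_rules_at a" and "climb_step Y W (map item_of (tl u)) g \<noteq> 0"
    by auto
  then have "g = map item_of (tl u) @ [Corner Y W] \<or> g = map item_of (tl u)"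
    unfolding climb_step_def by (auto split: if_splits)
  then show ?thesis using letter_rules_atD(3,4)[OF p W] by (auto simp: subset_iff)
qed (use assms in \<open>auto split: if_splits\<close>)

lemma corner_rules_tlD:
  assumes "(Z, u) \<in> corner_rules Y"
  shows "tl u = hd (tl u) # tl (tl u)" "item_of (hd (tl u)) \<in> items"
    "length (tl (tl u)) + 2 \<le> max_rule_length" "set (map item_of (tl (tl u))) \<subseteq> items"
proof -
  note u = corner_rulesD[OF assms]
  from assms have Z: "Z \<in> V" "u \<in> rules Z" unfolding corner_rules_def by auto
  show tl: "tl u = hd (tl u) # tl (tl u)" using u(2) by (cases "tl u") auto
  have sI: "set (map item_of u) \<subseteq> items" by (rule set_item_of_rule[OF Z])
  have "hd (tl u) \<in> set u" using u(1) tl by (metis list.set_intros(1) list.set_intros(2))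
  then show "item_of (hd (tl u)) \<in> items" using sI by auto
  show "length (tl (tl u)) + 2 \<le> max_rule_length" using rule_length_le[OF Z] u(1,2) tl
    by (metis add_2_eq_Suc' length_Cons)
  have "set (tl (tl u)) \<subseteq> set u" using u(1) tl by (metis set_subset_Cons subset_trans)
  then show "set (map item_of (tl (tl u))) \<subseteq> items" using sI by auto
qed

lemma cauchy_rhs_series_at_Cons:
  assumes c: "item_of c \<in> items"
  shows "cauchy (rhs_series (c # t)) D (a # x)
       = (\<Sum>g'\<in>stacks. symbol_step c a g' * cauchy (stack_series (g' @ map item_of t)) D x)"
proof -
  let ?I = "item_series (item_of c)" and ?T = "stack_series (map item_of t)"
  have "rhs_series (c # t) = cauchy ?I ?T"
    unfolding stack_series_item_of[symmetric] list.map stack_series_push ..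
  then have "cauchy (rhs_series (c # t)) D (a # x) = cauchy ?I (cauchy ?T D) (a # x)"
    by (simp only: cauchy_assoc)
  also have "\<dots> = cauchy (\<lambda>x. ?I (a # x)) (cauchy ?T D) x"
    unfolding cauchy_Cons[of ?I] item_series_Nil[OF c] by simp
  also have "\<dots> = (\<Sum>g'\<in>stacks. symbol_step c a g' * cauchy (stack_series g') (cauchy ?T D) x)"
    unfolding symbol_series_at_Cons[OF c] cauchy_sum_left cauchy_smult_left ..
  also have "\<dots> = (\<Sum>g'\<in>stacks. symbol_step c a g' * cauchy (stack_series (g' @ map item_of t)) D x)"
    unfolding stack_series_append cauchy_assoc ..
  finally show ?thesis .
qed

lemma cauchy_corner_rule_at_Cons:
  assumes zu: "(Z, u) \<in> corner_rules Y" and X: "X \<in> V"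
  shows "cauchy (rhs_series (tl u)) (delta_plus corner Z X) (a # x)
       = (\<Sum>g'\<in>stacks. \<Sum>g\<in>stacks. symbol_step (hd (tl u)) a g'
           * climb_step Z X (g' @ map item_of (tl (tl u))) g * stack_series g x)"
proof -
  note u = corner_rules_tlD[OF zu]
  let ?c = "hd (tl u)" and ?t = "map item_of (tl (tl u))"
  have "cauchy (rhs_series (tl u)) (delta_plus corner Z X) (a # x)
      = (\<Sum>g'\<in>stacks. symbol_step ?c a g' * cauchy (stack_series (g' @ ?t)) (delta_plus corner Z X) x)"
    by (subst u(1)) (rule cauchy_rhs_series_at_Cons[OF u(2)])
  also have "\<dots> = (\<Sum>g'\<in>stacks. \<Sum>g\<in>stacks. symbol_step ?c a g' * climb_step Z X (g' @ ?t) g * stack_series g x)"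
  proof (rule sum.cong[OF refl])
    fix g'
    show "symbol_step ?c a g' * cauchy (stack_series (g' @ ?t)) (delta_plus corner Z X) x
        = (\<Sum>g\<in>stacks. symbol_step ?c a g' * climb_step Z X (g' @ ?t) g * stack_series g x)"
    proof (cases "symbol_step ?c a g' = 0")
      case False
      have "Corner Z X \<in> items" using corner_rulesD(4)[OF zu] X unfolding items_def by auto
      then have "g' @ ?t \<in> stacks" "(g' @ ?t) @ [Corner Z X] \<in> stacks"
        using symbol_step_nonzeroD[OF u(2) False] u(3,4) unfolding stacks_def stack_bound_def by auto
      then show ?thesis
        by (simp only: sum_climb_step[symmetric] sum_distrib_left mult.assoc)
    qed simp
  qed
  finally show ?thesis .
qed

lemma corner_at_Cons:
  assumes X: "X \<in> V"
  shows "corner Y X (a # x) = (\<Sum>g\<in>stacks. corner_item_step Y X a g * stack_series g x)"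
proof -
  have "corner Y X (a # x) = (\<Sum>(Z, u)\<in>corner_rules Y. P Z u * cauchy (rhs_series (tl u)) (delta_plus corner Z X) (a # x))"
    by (subst corner_unfold) (simp add: corner_step_def)
  also have "\<dots> = (\<Sum>(Z, u)\<in>corner_rules Y. \<Sum>g\<in>stacks. P Z u * (\<Sum>g'\<in>stacks. symbol_step (hd (tl u)) a g'
      * climb_step Z X (g' @ map item_of (tl (tl u))) g) * stack_series g x)"
    by (intro sum.cong refl)
      (auto simp: cauchy_corner_rule_at_Cons[OF _ X] sum_distrib_left sum_distrib_right mult.assoc intro: sum.swap)
  also have "\<dots> = (\<Sum>g\<in>stacks. corner_item_step Y X a g * stack_series g x)"
    unfolding corner_item_step_def sum_distrib_right split_def by (rule sum.swap)
  finally show ?thesis .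
qed

lemma item_series_at_Cons:
  assumes "h \<in> items"
  shows "item_series h (a#x) = (\<Sum>g\<in>stacks. item_step h a g * stack_series g x)"
proof -
  consider b where "h = Letter b" | W where "h = Var W" "W \<in> V" | Y X where "h = Corner Y X" "Y \<in> V" "X \<in> V"
    using assms unfolding items_def by auto
  then show ?thesis
  proof cases
    case 1 then show ?thesis using symbol_series_at_Cons[of "Inl b"] by (simp add: items_def)
  next
    case 2 then show ?thesis using solution_at_Cons by simp
  next
    case 3 then show ?thesis using corner_at_Cons by simp
  qed
qed

lemma stack_series_at_Cons:
  assumes "h \<in> items"
  shows "stack_series (h#t) (a#x) = (\<Sum>g\<in>stacks. item_step h a g * stack_series (g @ t) x)"
proof -
  have "stack_series (h#t) (a#x) = cauchy (\<lambda>x. item_series h (a#x)) (stack_series t) x"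
    by (simp add: stack_series_push cauchy_Cons item_series_Nil[OF assms])
  also have "\<dots> = cauchy (\<lambda>x. \<Sum>g\<in>stacks. item_step h a g * stack_series g x) (stack_series t) x"
    using item_series_at_Cons[OF assms] by simp
  also have "\<dots> = (\<Sum>g\<in>stacks. item_step h a g * stack_series (g @ t) x)"
    by (simp add: cauchy_sum_left cauchy_smult_left stack_series_append)
  finally show ?thesis .
qed

end

section \<open>The automaton\<close>

context proper_solution_finite
begin

definition state_of :: "'a item list \<Rightarrow> nat" where
  "state_of = (SOME h. bij_betw h stacks {0..<card stacks})"

definition stack_of :: "nat \<Rightarrow> 'a item list" where
  "stack_of = inv_into stacks state_of"

definition states :: "nat set" where
  "states = state_of ` stacks"

lemma inj_on_state_of: "inj_on state_of stacks"
proof -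
  have "bij_betw state_of stacks {0..<card stacks}"
    unfolding state_of_def using ex_bij_betw_finite_nat[OF finite_stacks] by (rule someI_ex)
  then show ?thesis by (rule bij_betw_imp_inj_on)
qed

lemma stack_of_state_of [simp]: "g \<in> stacks \<Longrightarrow> stack_of (state_of g) = g"
  unfolding stack_of_def using inj_on_state_of by (rule inv_into_f_f)

lemma state_of_in_states: "g \<in> stacks \<Longrightarrow> state_of g \<in> states"
  unfolding states_def by simp

lemma finite_states: "finite states"
  unfolding states_def using finite_stacks by simp

lemma sum_states: "(\<Sum>r\<in>states. f r) = (\<Sum>g\<in>stacks. f (state_of g))"
  unfolding states_def by (rule sum.reindex[OF inj_on_state_of, unfolded comp_def])

lemma empty_in_stacks: "[] \<in> stacks"
  unfolding stacks_def by simp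

lemma tl_in_stacks: "s \<in> stacks \<Longrightarrow> tl s \<in> stacks"
  unfolding stacks_def by (cases s) auto

lemma hd_in_items: "h # t \<in> stacks \<Longrightarrow> h \<in> items"
  unfolding stacks_def by auto

lemma stack_series_at_Nil_eq_0: "g \<in> stacks \<Longrightarrow> g \<noteq> [] \<Longrightarrow> stack_series g [] = 0"
  using stack_series_at_Nil unfolding stacks_def by auto

text \<open>The state of the automaton is the stack of pending items. Reading \<open>a\<close> replaces the top item \<open>h\<close>
  by a stack \<open>g\<close> with weight \<open>item_step h a g\<close>. When both \<open>g\<close> and the rest \<open>t\<close> of the stack are
  nonempty the stack would grow, so the automaton makes a call instead and continues with \<open>g\<close> alone;
  the matching return sees the state before the call and restores \<open>t\<close>.\<close>

definition int_step :: "'a item list \<Rightarrow> 'a \<Rightarrow> 'a item list \<Rightarrow> 'k" where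
  "int_step s a r = (case s of [] \<Rightarrow> 0 | h # t \<Rightarrow>
      (\<Sum>g\<in>stacks. item_step h a g * (if (g = [] \<or> t = []) \<and> r = g @ t then 1 else 0)))"

definition call_step :: "'a item list \<Rightarrow> 'a \<Rightarrow> 'a item list \<Rightarrow> 'k" where
  "call_step s a r = (case s of [] \<Rightarrow> 0 | h # t \<Rightarrow> if t \<noteq> [] \<and> r \<noteq> [] then item_step h a r else 0)"

definition ret_step :: "'a item list \<Rightarrow> 'a \<Rightarrow> 'k" where
  "ret_step s b = (case s of [h] \<Rightarrow> item_step h b [] | _ \<Rightarrow> 0)"

definition dint :: "nat \<Rightarrow> 'a \<Rightarrow> nat \<Rightarrow> 'k" where
  "dint p a q = int_step (stack_of p) a (stack_of q)"

definition dcall :: "nat \<Rightarrow> 'a \<Rightarrow> nat \<Rightarrow> 'k" where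
  "dcall p a q = call_step (stack_of p) a (stack_of q)"

definition dret :: "nat \<Rightarrow> nat \<Rightarrow> 'a \<Rightarrow> nat \<Rightarrow> 'k" where
  "dret p p0 b q = ret_step (stack_of p) b * (if stack_of q = tl (stack_of p0) then 1 else 0)"

abbreviation aut_weight :: "nat \<Rightarrow> 'a list \<Rightarrow> nat \<Rightarrow> 'k" where
  "aut_weight \<equiv> nested_weight states dcall dint dret"

text \<open>The suffix \<open>z\<close> is either empty or the letter read by a pending return.\<close>

definition end_weight :: "'a list \<Rightarrow> 'a item list \<Rightarrow> 'k" where
  "end_weight z q = (if z = [] then (if q = [] then 1 else 0) else ret_step q (hd z))"

definition stack_weight :: "'a item list \<Rightarrow> 'a list \<Rightarrow> 'a list \<Rightarrow> 'k" where
  "stack_weight s w z = (\<Sum>q\<in>stacks. aut_weight (state_of s) w (state_of q) * end_weight z q)"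

lemma stack_weight_Nil:
  assumes "s \<in> stacks"
  shows "stack_weight s [] z = end_weight z s"
proof -
  have "aut_weight (state_of s) [] (state_of q) = (if q = s then 1 else 0)" if "q \<in> stacks" for q
    using nested_weight_Nil[OF state_of_in_states[OF assms], of dcall dint dret "state_of q"]
      inj_on_state_of assms that
    unfolding inj_on_def by auto
  then have "stack_weight s [] z = (\<Sum>q\<in>stacks. if q = s then end_weight z q else 0)"
    unfolding stack_weight_def by (intro sum.cong refl) auto
  then show ?thesis using assms finite_stacks by simp
qed

lemma aut_weight_Cons:
  assumes s: "s \<in> stacks" and q: "q \<in> states"
  shows "aut_weight (state_of s) (a # w) q = (\<Sum>r\<in>stacks. int_step s a r * aut_weight (state_of r) w q)
    + (\<Sum>j<length w. \<Sum>r\<in>stacks. call_step s a r * stack_weight r (take j w) [w ! j]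
         * aut_weight (state_of (tl s)) (drop (Suc j) w) q)"
proof -
  have ret: "stack_weight r v [b] = (\<Sum>s2\<in>stacks. aut_weight (state_of r) v (state_of s2) * ret_step s2 b)"
    for r v b
    by (simp add: stack_weight_def end_weight_def)
  have collapse: "(\<Sum>s2\<in>stacks. \<Sum>t\<in>stacks. x * aut_weight (state_of r) v (state_of s2)
        * (ret_step s2 b * (if t = tl s then 1 else 0)) * f t) = x * stack_weight r v [b] * f (tl s)"
    for x r v b and f :: "'a item list \<Rightarrow> 'k"
  proof -
    have "(\<Sum>t\<in>stacks. c * (e * (if t = tl s then 1 else 0)) * f t)
        = (\<Sum>t\<in>stacks. if t = tl s then c * e * f t else 0)" for c e :: 'k
      by (intro sum.cong refl) auto
    then have inner: "(\<Sum>t\<in>stacks. c * (e * (if t = tl s then 1 else 0)) * f t) = c * e * f (tl s)"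
      for c e :: 'k
      using tl_in_stacks[OF s] finite_stacks by simp
    show ?thesis unfolding ret sum_distrib_left sum_distrib_right
      by (intro sum.cong refl, subst inner) (simp add: mult.assoc)
  qed
  show ?thesis
    by (subst nested_weight_Cons[OF finite_states state_of_in_states[OF s]])
      (simp add: s sum_states dint_def dcall_def dret_def collapse)
qed

lemma stack_weight_Cons:
  assumes s: "s \<in> stacks"
  shows "stack_weight s (a # w) z = (\<Sum>r\<in>stacks. int_step s a r * stack_weight r w z)
    + (\<Sum>j<length w. \<Sum>r\<in>stacks. call_step s a r * stack_weight r (take j w) [w ! j]
         * stack_weight (tl s) (drop (Suc j) w) z)"
proof -
  let ?F = "\<lambda>j q. aut_weight (state_of (tl s)) (drop (Suc j) w) (state_of q)"
  let ?c = "\<lambda>j r. call_step s a r * stack_weight r (take j w) [w ! j]"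
  have "stack_weight s (a # w) z
      = (\<Sum>q\<in>stacks. (\<Sum>r\<in>stacks. int_step s a r * aut_weight (state_of r) w (state_of q)) * end_weight z q)
      + (\<Sum>q\<in>stacks. (\<Sum>j<length w. \<Sum>r\<in>stacks. ?c j r * ?F j q) * end_weight z q)"
    unfolding stack_weight_def[of s]
    by (simp add: aut_weight_Cons[OF s state_of_in_states] distrib_right sum.distrib)
  also have "(\<Sum>q\<in>stacks. (\<Sum>r\<in>stacks. int_step s a r * aut_weight (state_of r) w (state_of q)) * end_weight z q)
      = (\<Sum>r\<in>stacks. int_step s a r * stack_weight r w z)"
    unfolding stack_weight_def sum_distrib_left sum_distrib_right mult.assoc by (rule sum.swap)
  also have "(\<Sum>q\<in>stacks. (\<Sum>j<length w. \<Sum>r\<in>stacks. ?c j r * ?F j q) * end_weight z q)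
      = (\<Sum>j<length w. \<Sum>q\<in>stacks. \<Sum>r\<in>stacks. ?c j r * (?F j q * end_weight z q))"
    unfolding sum_distrib_right mult.assoc by (rule sum.swap)
  also have "\<dots> = (\<Sum>j<length w. \<Sum>r\<in>stacks. ?c j r * stack_weight (tl s) (drop (Suc j) w) z)"
    unfolding stack_weight_def[of "tl s"] sum_distrib_left by (intro sum.cong refl sum.swap)
  finally show ?thesis .
qed

lemma sum_int_step:
  assumes "h # t0 \<in> stacks"
  shows "(\<Sum>r\<in>stacks. int_step (h # t0) a r * f r) = (\<Sum>g\<in>stacks. item_step h a g * (if g = [] \<or> t0 = [] then f (g @ t0) else 0))"
proof -
  have t0: "t0 \<in> stacks" using tl_in_stacks[OF assms] by simp
  have "(\<Sum>r\<in>stacks. int_step (h # t0) a r * f r) = (\<Sum>r\<in>stacks. \<Sum>g\<in>stacks. item_step h a g * ((if (g = [] \<or> t0 = []) \<and> r = g @ t0 then 1 else 0) * f r))"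
    unfolding int_step_def by (simp add: sum_distrib_right mult.assoc)
  also have "\<dots> = (\<Sum>g\<in>stacks. item_step h a g * (\<Sum>r\<in>stacks. (if (g = [] \<or> t0 = []) \<and> r = g @ t0 then 1 else 0) * f r))"
    by (subst sum.swap) (simp add: sum_distrib_left)
  also have "\<dots> = (\<Sum>g\<in>stacks. item_step h a g * (if g = [] \<or> t0 = [] then f (g @ t0) else 0))"
  proof (rule sum.cong[OF refl])
    fix g assume g: "g \<in> stacks"
    show "item_step h a g * (\<Sum>r\<in>stacks. (if (g = [] \<or> t0 = []) \<and> r = g @ t0 then 1 else 0) * f r)
        = item_step h a g * (if g = [] \<or> t0 = [] then f (g @ t0) else 0)"
    proof (cases "g = [] \<or> t0 = []")
      case True
      then have "g @ t0 \<in> stacks" using g t0 by auto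
      moreover have "(\<Sum>r\<in>stacks. (if (g = [] \<or> t0 = []) \<and> r = g @ t0 then 1 else 0) * f r)
          = (\<Sum>r\<in>stacks. if r = g @ t0 then f r else 0)" using True by (intro sum.cong) auto
      ultimately show ?thesis using True finite_stacks by (simp add: sum.delta)
    qed simp
  qed
  finally show ?thesis .
qed

lemma sum_call_step:
  "(\<Sum>r\<in>stacks. call_step (h # t0) a r * f r) = (\<Sum>g\<in>stacks. item_step h a g * (if t0 \<noteq> [] \<and> g \<noteq> [] then f g else 0))"
  unfolding call_step_def by (intro sum.cong refl) auto

lemma stack_series_at_Cons_steps:
  assumes s: "s \<in> stacks" and z: "length z \<le> 1"
  shows "stack_series s (a # w @ z) = (\<Sum>r\<in>stacks. int_step s a r * stack_series r (w @ z))
    + (\<Sum>j<length w. \<Sum>r\<in>stacks. call_step s a r * stack_series r (take (Suc j) w)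
         * stack_series (tl s) (drop (Suc j) w @ z))"
proof (cases s)
  case Nil
  then show ?thesis by (simp add: int_step_def call_step_def stack_series_empty char_series_def)
next
  case (Cons h t)
  have h: "h \<in> items" and t: "t \<in> stacks" using s tl_in_stacks[OF s] hd_in_items Cons by auto
  have "(\<Sum>j<length w. \<Sum>r\<in>stacks. call_step s a r * stack_series r (take (Suc j) w)
         * stack_series t (drop (Suc j) w @ z))
      = (\<Sum>r\<in>stacks. call_step s a r * cauchy (stack_series r) (stack_series t) (w @ z))"
  proof -
    have "call_step s a r * cauchy (stack_series r) (stack_series t) (w @ z)
        = (\<Sum>j<length w. call_step s a r * stack_series r (take (Suc j) w) * stack_series t (drop (Suc j) w @ z))"
      if "r \<in> stacks" for r
    proof (cases "r = [] \<or> t = []")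
      case False
      then show ?thesis
        using that t z by (simp add: cauchy_append_short stack_series_at_Nil_eq_0 sum_distrib_left mult.assoc)
    qed (auto simp: Cons call_step_def)
    then show ?thesis by (simp add: sum.swap[of _ "{..<length w}"])
  qed
  also have "\<dots> = (\<Sum>g\<in>stacks. item_step h a g * (if t \<noteq> [] \<and> g \<noteq> [] then stack_series (g @ t) (w @ z) else 0))"
    unfolding Cons sum_call_step stack_series_append ..
  moreover have "(\<Sum>r\<in>stacks. int_step s a r * stack_series r (w @ z))
      = (\<Sum>g\<in>stacks. item_step h a g * (if g = [] \<or> t = [] then stack_series (g @ t) (w @ z) else 0))"
    unfolding Cons using s Cons by (intro sum_int_step) simp
  ultimately show ?thesis
    unfolding Cons stack_series_at_Cons[OF h] list.sel
    by (simp add: sum.distrib[symmetric] distrib_left[symmetric]) (intro sum.cong refl, auto)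
qed

lemma end_weight_eq_stack_series:
  assumes s: "s \<in> stacks" and z: "length z \<le> 1"
  shows "end_weight z s = stack_series s z"
proof (cases z)
  case Nil
  then show ?thesis using stack_series_at_Nil s unfolding stacks_def by (simp add: end_weight_def)
next
  case (Cons b z')
  with z have zb: "z = [b]" by simp
  show ?thesis
  proof (cases s)
    case Nil
    then show ?thesis by (simp add: zb end_weight_def ret_step_def stack_series_empty char_series_def)
  next
    case (Cons h t)
    have "stack_series s [b] = (\<Sum>g\<in>stacks. item_step h b g * stack_series (g @ t) [])"
      unfolding Cons using s Cons by (intro stack_series_at_Cons hd_in_items) simp
    also have "\<dots> = (\<Sum>g\<in>stacks. if g = [] then (if t = [] then item_step h b g else 0) else 0)"
    proof (rule sum.cong[OF refl])
      fix g assume "g \<in> stacks"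
      then have "set (g @ t) \<subseteq> items" using s Cons unfolding stacks_def by auto
      then show "item_step h b g * stack_series (g @ t) [] = (if g = [] then (if t = [] then item_step h b g else 0) else 0)"
        by (simp add: stack_series_at_Nil)
    qed
    also have "\<dots> = (if t = [] then item_step h b [] else 0)"
      using empty_in_stacks finite_stacks by simp
    finally show ?thesis unfolding zb Cons end_weight_def ret_step_def by (cases t) auto
  qed
qed

lemma stack_weight_eq_stack_series:
  assumes "s \<in> stacks" "length z \<le> 1"
  shows "stack_weight s w z = stack_series s (w @ z)"
  using assms
proof (induction "length w" arbitrary: w s z rule: less_induct)
  case less
  show ?case
  proof (cases w)
    case Nil
    then show ?thesis using less.prems by (simp add: stack_weight_Nil end_weight_eq_stack_series)
  next
    case (Cons a v)
    have IH: "stack_weight r u y = stack_series r (u @ y)"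
      if "length u < length w" "r \<in> stacks" "length y \<le> 1" for r u y
      using less.hyps that by blast
    have "stack_weight s w z = (\<Sum>r\<in>stacks. int_step s a r * stack_series r (v @ z))
      + (\<Sum>j<length v. \<Sum>r\<in>stacks. call_step s a r * stack_series r (take (Suc j) v)
           * stack_series (tl s) (drop (Suc j) v @ z))"
      unfolding Cons stack_weight_Cons[OF less.prems(1)]
      using less.prems tl_in_stacks Cons by (simp add: IH take_Suc_conv_app_nth)
    also have "\<dots> = stack_series s (w @ z)"
      unfolding Cons using stack_series_at_Cons_steps[OF less.prems] by simp
    finally show ?thesis .
  qed
qed

lemma regular_nw_series_with_proj_solution:
  assumes X0: "X0 \<in> V"
  shows "\<exists>S' :: 'a nword \<Rightarrow> 'k. regular_nw_series S' \<and> proj S' = S X0"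
proof -
  define \<iota> :: "nat \<Rightarrow> 'k" where "\<iota> p = (if p = state_of [Var X0] then 1 else 0)" for p
  define \<kappa> :: "nat \<Rightarrow> 'k" where "\<kappa> q = end_weight [] (stack_of q)" for q
  define S' where "S' = wnwa_behaviour states \<iota> dcall dint dret \<kappa>"
  have start: "[Var X0] \<in> stacks"
    using X0 unfolding stacks_def items_def stack_bound_def by auto
  have "proj S' w = S X0 w" for w
  proof (cases "w = []")
    case True
    then show ?thesis using proj_Nil solution_Nil X0 by simp
  next
    case False
    have "proj S' w = (\<Sum>p\<in>states. \<Sum>q\<in>states. \<iota> p * aut_weight p w q * \<kappa> q)"
      unfolding S'_def by (rule proj_wnwa_behaviour[OF finite_states False])
    also have "\<dots> = (\<Sum>g\<in>stacks. if g = [Var X0] then stack_weight g w [] else 0)"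
      unfolding sum_states stack_weight_def
      by (intro sum.cong refl) (auto simp: \<iota>_def \<kappa>_def inj_on_eq_iff[OF inj_on_state_of] start)
    also have "\<dots> = stack_series [Var X0] w"
      using start finite_stacks stack_weight_eq_stack_series[OF start, of "[]" w] by simp
    also have "\<dots> = S X0 w"
      by (simp add: stack_series_push stack_series_empty cauchy_unit_right)
    finally show ?thesis .
  qed
  moreover have "regular_nw_series S'"
    unfolding regular_nw_series_def S'_def using finite_states by blast
  ultimately show ?thesis by blast
qed

end

theorem proposition6p5:
  fixes R :: "'a::finite list \<Rightarrow> 'k::comm_semiring_1"
  assumes "(0::'k) \<noteq> 1"
    and "algebraic_series R"
  shows "\<exists>S :: 'a nword \<Rightarrow> 'k. regular_nw_series S \<and> proj S = R"
proof -
  obtain V P S X0 where sys: "alg_system V P" "proper_system V P" "is_solution V P S"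
    and qr: "\<forall>X \<in> V. quasiregular (S X)" and X0: "X0 \<in> V" and R: "R = S X0"
    using assms(2) unfolding algebraic_series_def by blast
  interpret proper_solution_finite V P S
    using sys qr by unfold_locales (auto simp: quasiregular_def)
  show ?thesis
    unfolding R by (rule regular_nw_series_with_proj_solution[OF X0])
qed

end
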